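(* Let $\nu>0$, $b\ge0$, $a,c\in\mathbb{R}$, $x_0^2:=a^2+4\nu b$, and $k_m\ge0$, $\omega_m>0$ fixed. Let $D^\infty=\{(\omega,k):\omega_m\le|\omega|<+\infty,\ k_m\le|k|<+\infty\}$. For small overlap $L>0$, the Robin best approximation problem $$\inf_{p\in\mathbb{C}}\sup_{(\omega,k)\in D^\infty}|\rho(\omega,k,p,0,L)|$$ has a unique solution $(p_{0,\infty}^*(L),\delta_{0,\infty}^*(L))$ (minimizer and minimal value), and as $L\to0$ $$p_{0,\infty}^*(L)\sim\frac12\sqrt[3]{\frac{\nu A^2}{L}},\qquad \delta_{0,\infty}^*(L)\sim 1-\frac{A}{2p_{0,\infty}^*(L)},$$ with $A$ the constant defined in the context.
   Context: This concerns the optimized Schwarz waveform relaxation algorithm for $\partial_t u+(a,c)\cdot\nabla u-\nu\Delta u+bu=f$ on $\mathbb{R}^2$, decomposed into $\Omega_1=(-\infty,L)\times\mathbb{R}$ and $\Omega_2=(0,\infty)\times\mathbb{R}$ ($L\ge0$ the overlap), with transmission operators $(\nu\nabla-\tfrac{(a,c)^T}{2})\cdot n_i+\tfrac{s}{2}$, $s=p+q(\partial_t+c\partial_y-\nu\Delta_y)$; its convergence factor in Fourier variables $(\omega,k)$ is $$\rho(\omega,k,p,q,L)=\frac{p+q(\nu k^2+i(\omega+ck))-\sqrt{x_0^2+4\nu(\nu k^2+i(\omega+ck))}}{p+q(\nu k^2+i(\omega+ck))+\sqrt{x_0^2+4\nu(\nu k^2+i(\omega+ck))}}\,e^{-\frac{L}{2\nu}\sqrt{x_0^2+4\nu(\nu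 k^2+i(\omega+ck))}},$$ with $\sqrt{\cdot}$ the branch with positive real part; Robin conditions correspond to $q=0$. Define $$\bar k=|c|\frac{\sqrt{(c^2+x_0^2)^2+16\nu^2\omega_m^2}-(c^2+x_0^2)}{8\nu^2\omega_m},\qquad \varphi(k,\xi)=2\sqrt2\sqrt{\sqrt{(x_0^2+4\nu^2k^2)^2+16\nu^2\xi^2}+x_0^2+4\nu^2k^2},$$ and $A=\varphi(\bar k,-\omega_m+|c|\bar k)$ if $k_m\le\bar k$; $A=\varphi(k_m,-\omega_m+|c|k_m)$ if $\bar k\le k_m\le\omega_m/|c|$; $A=\varphi(k_m,0)$ if $k_m\ge\omega_m/|c|$. Standing assumption: either $x_0^2+4\nu^2k_m^2\ne0$ or $\omega_m\ne0$. $\sim$ denotes asymptotic equivalence as $L\to0$. *)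

theory Defs
  imports "HOL-Analysis.Analysis" "HOL-Library.Landau_Symbols"
begin

text \<open>Convergence factor rho(omega,k,p,q,L); x0sq stands for x_0^2.
  csqrt is the principal branch (positive real part off the negative real axis).\<close>
definition rho :: "real \<Rightarrow> real \<Rightarrow> real \<Rightarrow> real \<Rightarrow> real \<Rightarrow> complex \<Rightarrow> complex \<Rightarrow> real \<Rightarrow> complex" where
  "rho \<nu> c x0sq \<omega> k p q L =
     (let z = complex_of_real (\<nu> * k\<^sup>2) + \<i> * complex_of_real (\<omega> + c * k);
          r = csqrt (complex_of_real x0sq + 4 * complex_of_real \<nu> * z)
      in ((p + q * z - r) / (p + q * z + r)) * exp (- complex_of_real (L / (2 * \<nu>)) * r))"

definition Dinf :: "real \<Rightarrow> real \<Rightarrow> (real \<times> real) set" where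
  "Dinf \<omega>m km = {(\<omega>, k). \<omega>m \<le> \<bar>\<omega>\<bar> \<and> km \<le> \<bar>k\<bar>}"

definition robin_sup :: "real \<Rightarrow> real \<Rightarrow> real \<Rightarrow> real \<Rightarrow> real \<Rightarrow> real \<Rightarrow> complex \<Rightarrow> ereal" where
  "robin_sup \<nu> c x0sq \<omega>m km L p =
     (SUP wk \<in> Dinf \<omega>m km. ereal (cmod (rho \<nu> c x0sq (fst wk) (snd wk) p 0 L)))"

definition kbar :: "real \<Rightarrow> real \<Rightarrow> real \<Rightarrow> real \<Rightarrow> real" where
  "kbar \<nu> c x0sq \<omega>m =
     \<bar>c\<bar> * (sqrt ((c\<^sup>2 + x0sq)\<^sup>2 + 16 * \<nu>\<^sup>2 * \<omega>m\<^sup>2) - (c\<^sup>2 + x0sq)) / (8 * \<nu>\<^sup>2 * \<omega>m)"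

definition phi :: "real \<Rightarrow> real \<Rightarrow> real \<Rightarrow> real \<Rightarrow> real" where
  "phi \<nu> x0sq k \<xi> =
     2 * sqrt 2 * sqrt (sqrt ((x0sq + 4 * \<nu>\<^sup>2 * k\<^sup>2)\<^sup>2 + 16 * \<nu>\<^sup>2 * \<xi>\<^sup>2) + x0sq + 4 * \<nu>\<^sup>2 * k\<^sup>2)"

text \<open>The constant A. When c = 0 we read omega_m/|c| as +infinity, so the third case never applies.\<close>
definition Aconst :: "real \<Rightarrow> real \<Rightarrow> real \<Rightarrow> real \<Rightarrow> real \<Rightarrow> real" where
  "Aconst \<nu> c x0sq \<omega>m km =
     (let kb = kbar \<nu> c x0sq \<omega>m in
      if km \<le> kb then phi \<nu> x0sq kb (- \<omega>m + \<bar>c\<bar> * kb)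
      else if c = 0 \<or> km \<le> \<omega>m / \<bar>c\<bar> then phi \<nu> x0sq km (- \<omega>m + \<bar>c\<bar> * km)
      else phi \<nu> x0sq km 0)"

end

theory Submission
  imports Defs "HOL-Real_Asymp.Real_Asymp"
begin

text \<open>Write \<open>\<lambda> = sqrt_rad \<omega> k\<close> for the square root in \<open>\<rho>\<close> and \<open>X = Re \<lambda>\<close>. On \<open>D\<^sup>\<infinity>\<close> the
  minimum of \<open>X\<close> is exactly \<open>A / 4\<close>; the three cases in the definition of \<open>A\<close> are the three
  possible positions of the minimiser. For real \<open>p\<close> one has
  \<open>|\<rho>|\<^sup>2 = (1 - 4 p X / ((p + X)\<^sup>2 + Y\<^sup>2)) exp (- L X / \<nu>)\<close> with \<open>Y = Im \<lambda>\<close>, \<open>Y\<^sup>2 \<le> X\<^sup>2\<close>.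

  The sup is invariant under \<open>p \<mapsto> cnj p\<close>, and by the parallelogram law the
  midpoint of two distinct parameters with sup \<open>\<le> \<delta>\<close> has sup \<open>< \<delta>\<close>. Every parameter with
  small sup has real part in a fixed compact interval of \<open>(0, \<infinity>)\<close>, on which the sup is
  continuous in real \<open>p\<close>. Hence a real minimiser exists, and the midpoint property makes it the
  unique minimiser over all of \<open>\<complex>\<close>.

  For the asymptotics put \<open>a = A / p0(L)\<close> with \<open>p0(L) = root 3 (\<nu> A\<^sup>2 / L) / 2\<close>, so that
  \<open>L / \<nu> = a\<^sup>3 / (8 A)\<close>. The choice \<open>p = p0\<close> gives sup \<open>\<le> exp (- (a - a\<^sup>2) / 2)\<close>, while the
  frequencies with \<open>X = A / 4\<close> and with \<open>X = 4 A / a\<^sup>2\<close> bound the optimal sup from below.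
  Together these squeeze \<open>p\<^sup>* / p0\<close> and \<open>2 p\<^sup>* (1 - \<delta>\<^sup>*) / A\<close> between explicit functions of \<open>a\<close>
  that tend to \<open>1\<close> as \<open>a \<rightarrow> 0\<close>.\<close>

lemma quad_form_min_extend:
  fixes Y C k0 km wm :: real
  assumes Y: "Y > 0" and C: "C \<ge> 0" and wm: "wm > 0" and Ck0: "C * k0 \<le> wm"
    and H: "\<And>K. K \<ge> km \<Longrightarrow> C * K \<le> wm \<Longrightarrow> K\<^sup>2 + (wm - C*K)\<^sup>2 / Y \<ge> k0\<^sup>2 + (wm - C*k0)\<^sup>2 / Y"
    and kmC: "C > 0 \<Longrightarrow> C * km \<le> wm"
    and K: "K \<ge> km" "km \<ge> 0" and xi: "wm - C * K \<le> \<bar>\<xi>\<bar>"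
  shows "K\<^sup>2 + \<xi>\<^sup>2 / Y \<ge> k0\<^sup>2 + (wm - C*k0)\<^sup>2 / Y"
proof (cases "C * K \<le> wm")
  case True
  have "0 \<le> wm - C*K" using True by simp
  hence "(wm - C*K)\<^sup>2 \<le> \<bar>\<xi>\<bar>\<^sup>2" using xi by (intro power_mono) auto
  hence "(wm - C*K)\<^sup>2 \<le> \<xi>\<^sup>2" by simp
  hence "(wm - C*K)\<^sup>2 / Y \<le> \<xi>\<^sup>2 / Y" using Y by (simp add: divide_right_mono)
  thus ?thesis using H[OF K(1) True] by linarith
next
  case False
  have Cp: "C > 0"
  proof (rule ccontr)
    assume "\<not> C > 0" hence "C = 0" using C by simp
    thus False using False wm by simp
  qed
  have "wm / C \<ge> km" using kmC[OF Cp] Cp by (simp add: field_simps)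
  moreover have "C * (wm / C) \<le> wm" using Cp by simp
  ultimately have h: "(wm/C)\<^sup>2 + (wm - C*(wm/C))\<^sup>2 / Y \<ge> k0\<^sup>2 + (wm - C*k0)\<^sup>2 / Y" using H by blast
  have "wm / C < K" using False Cp by (simp add: field_simps)
  hence "(wm/C)\<^sup>2 \<le> K\<^sup>2" using wm Cp by (intro power_mono) auto
  moreover have "\<xi>\<^sup>2 / Y \<ge> 0" using Y by simp
  ultimately show ?thesis using h Cp by simp
qed

lemma quad_form_min_increasing:
  fixes Y C k0 wm K :: real
  assumes Y: "Y > 0" and C: "C \<ge> 0" and k0: "k0 \<ge> 0" and st: "k0 * (Y + C\<^sup>2) \<ge> C * wm" and K: "K \<ge> k0"
  shows "K\<^sup>2 + (wm - C*K)\<^sup>2 / Y \<ge> k0\<^sup>2 + (wm - C*k0)\<^sup>2 / Y"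
proof -
  have "(K\<^sup>2 + (wm - C*K)\<^sup>2 / Y) - (k0\<^sup>2 + (wm - C*k0)\<^sup>2 / Y) = (K - k0) * ((K + k0) * (Y + C\<^sup>2) - 2 * C * wm) / Y"
    using Y by (simp add: field_simps power2_eq_square)
  moreover have "(K - k0) * ((K + k0) * (Y + C\<^sup>2) - 2 * C * wm) \<ge> 0"
  proof -
    have "(K + k0) * (Y + C\<^sup>2) \<ge> 2 * k0 * (Y + C\<^sup>2)" using K Y by (intro mult_right_mono) auto
    thus ?thesis using K st by (intro mult_nonneg_nonneg) auto
  qed
  ultimately show ?thesis using Y by (smt (verit) divide_nonneg_pos)
qed

lemma quad_form_min_stationary:
  fixes Y C k0 wm K :: real
  assumes Y: "Y > 0" and st: "k0 * (Y + C\<^sup>2) = C * wm"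
  shows "K\<^sup>2 + (wm - C*K)\<^sup>2 / Y \<ge> k0\<^sup>2 + (wm - C*k0)\<^sup>2 / Y"
proof -
  have "(K\<^sup>2 + (wm - C*K)\<^sup>2 / Y) - (k0\<^sup>2 + (wm - C*k0)\<^sup>2 / Y) = (K - k0) * ((K + k0) * (Y + C\<^sup>2) - 2 * C * wm) / Y"
    using Y by (simp add: field_simps power2_eq_square)
  also have "(K + k0) * (Y + C\<^sup>2) - 2 * C * wm = (K - k0) * (Y + C\<^sup>2)"
    using st by (simp add: algebra_simps)
  hence "(K - k0) * ((K + k0) * (Y + C\<^sup>2) - 2 * C * wm) / Y = (K - k0)\<^sup>2 * (Y + C\<^sup>2) / Y"
    by (simp add: power2_eq_square)
  finally show ?thesis using Y by (smt (verit) divide_nonneg_pos zero_le_power2 mult_nonneg_nonneg)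
qed

lemma kbar_props:
  fixes \<nu> c x0sq wm :: real
  assumes nu: "\<nu> > 0" and x0: "x0sq \<ge> 0" and wm: "wm > 0"
  defines "C \<equiv> \<bar>c\<bar>" and "\<beta> \<equiv> c\<^sup>2 + x0sq"
  shows "kbar \<nu> c x0sq wm \<ge> 0"
    and "4 * \<nu>\<^sup>2 * wm * (kbar \<nu> c x0sq wm)\<^sup>2 + C * \<beta> * kbar \<nu> c x0sq wm - C\<^sup>2 * wm = 0"
    and "kbar \<nu> c x0sq wm = 0 \<longleftrightarrow> C = 0"
proof -
  define R where "R = sqrt (\<beta>\<^sup>2 + 16 * \<nu>\<^sup>2 * wm\<^sup>2)"
  have b0: "\<beta> \<ge> 0" using x0 by (simp add: \<beta>_def)
  have R2: "R\<^sup>2 = \<beta>\<^sup>2 + 16 * \<nu>\<^sup>2 * wm\<^sup>2" by (simp add: R_def)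
  have "\<beta>\<^sup>2 < \<beta>\<^sup>2 + 16 * \<nu>\<^sup>2 * wm\<^sup>2" using nu wm by simp
  hence Rb: "R > \<beta>" unfolding R_def using b0 by (metis abs_of_nonneg real_sqrt_abs real_sqrt_less_iff)
  have kb: "kbar \<nu> c x0sq wm = C * (R - \<beta>) / (8 * \<nu>\<^sup>2 * wm)"
    by (simp add: kbar_def C_def \<beta>_def R_def)
  show "kbar \<nu> c x0sq wm \<ge> 0" unfolding kb using Rb nu wm by (simp add: C_def)
  show "kbar \<nu> c x0sq wm = 0 \<longleftrightarrow> C = 0" unfolding kb using Rb nu wm by simp
  have "4 * \<nu>\<^sup>2 * wm * (C * (R - \<beta>) / (8 * \<nu>\<^sup>2 * wm))\<^sup>2 + C * \<beta> * (C * (R - \<beta>) / (8 * \<nu>\<^sup>2 * wm)) - C\<^sup>2 * wm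
      = C\<^sup>2 * (R\<^sup>2 - \<beta>\<^sup>2 - 16 * \<nu>\<^sup>2 * wm\<^sup>2) / (16 * \<nu>\<^sup>2 * wm)"
    using nu wm by (simp add: field_simps power2_eq_square)
  also have "\<dots> = 0" using R2 by simp
  finally show "4 * \<nu>\<^sup>2 * wm * (kbar \<nu> c x0sq wm)\<^sup>2 + C * \<beta> * kbar \<nu> c x0sq wm - C\<^sup>2 * wm = 0"
    unfolding kb .
qed

lemma le_pos_root_quadratic:
  fixes y a q T :: real
  assumes y: "y > 0" and ey: "y\<^sup>2 - a * y - q = 0" and q: "q \<ge> 0" and T: "T \<ge> 0" and eT: "T\<^sup>2 - a * T - q \<le> 0"
  shows "T \<le> y"
proof (rule ccontr)
  assume "\<not> T \<le> y" hence Ty: "T > y" by simp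
  have "y - a = q / y" using ey y by (simp add: field_simps power2_eq_square)
  hence "y - a \<ge> 0" using q y by simp
  hence "T + y - a > 0" using Ty y by linarith
  hence "(T - y) * (T + y - a) > 0" using Ty by simp
  moreover have "(T - y) * (T + y - a) = (T\<^sup>2 - a * T - q) - (y\<^sup>2 - a * y - q)" by (simp add: algebra_simps power2_eq_square)
  ultimately show False using ey eT by linarith
qed

lemma quartic_factor_identity:
  fixes \<nu> C x0sq wm k0 :: real
  assumes "k0 \<noteq> 0"
  shows "(C * (wm - C*k0) / k0)\<^sup>2 - (x0sq + 4 * \<nu>\<^sup>2 * k0\<^sup>2) * (C * (wm - C*k0) / k0) - 4 * \<nu>\<^sup>2 * (wm - C*k0)\<^sup>2
     = - (wm - C*k0) * (4 * \<nu>\<^sup>2 * wm * k0\<^sup>2 + C * (C\<^sup>2 + x0sq) * k0 - C\<^sup>2 * wm) / k0\<^sup>2"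
  using assms by (simp add: field_simps power2_eq_square)

lemma csqrt_cnj: assumes "Im z \<noteq> 0 \<or> Re z \<ge> 0" shows "csqrt (cnj z) = cnj (csqrt z)"
proof (rule complex_eqI)
  show "Re (csqrt (cnj z)) = Re (cnj (csqrt z))" by simp
  show "Im (csqrt (cnj z)) = Im (cnj (csqrt z))"
  proof (cases "Im z = 0")
    case True
    hence "cmod z = Re z" using assms by (simp add: cmod_def)
    thus ?thesis using True by simp
  next
    case False thus ?thesis by (simp add: sgn_if)
  qed
qed

text \<open>With \<open>y = X / p\<close> and \<open>a = A / p\<close>, the left-hand side is the Robin gain
  \<open>4 p X / ((p + X)\<^sup>2 + X\<^sup>2)\<close> plus the overlap damping \<open>L X / \<nu>\<close> at \<open>p = p0(L)\<close>.\<close>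

lemma exp_gain_bound:
  fixes a y :: real
  assumes a: "a \<ge> 0" and y: "y \<ge> a / 4" "y > 0"
  shows "4 * y / (1 + 2*y + 2*y\<^sup>2) + a\<^sup>2 * y / 8 \<ge> a - a\<^sup>2"
proof (cases "y \<le> 1")
  case True
  have "4 * y / (1 + 4*y) \<le> 4 * y / (1 + 2*y + 2*y\<^sup>2)"
  proof (rule divide_left_mono)
    have "y * y \<le> y * 1" using True y by (intro mult_left_mono) auto
    thus "1 + 2*y + 2*y\<^sup>2 \<le> 1 + 4*y" by (simp add: power2_eq_square)
    show "0 \<le> 4 * y" using y by simp
    show "0 < (1 + 4*y) * (1 + 2*y + 2*y\<^sup>2)" using y by (intro mult_pos_pos) (auto simp: add_pos_nonneg)
  qed
  moreover have "a / (1 + a) \<le> 4 * y / (1 + 4*y)"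
  proof -
    have "a * (1 + 4*y) \<le> 4 * y * (1 + a)" using y a by (simp add: algebra_simps)
    thus ?thesis using a y by (simp add: divide_simps)
  qed
  moreover have "a - a\<^sup>2 \<le> a / (1 + a)"
  proof -
    have "(a - a\<^sup>2) * (1 + a) \<le> a" using a by (simp add: algebra_simps power2_eq_square power3_eq_cube)
    thus ?thesis using a by (simp add: divide_simps)
  qed
  moreover have "a\<^sup>2 * y / 8 \<ge> 0" using y by simp
  ultimately show ?thesis by linarith
next
  case False
  define z where "z = 2*y + 3"
  have zp: "z > 0" using y by (simp add: z_def)
  have "4 / z \<le> 4 * y / (1 + 2*y + 2*y\<^sup>2)"
  proof -
    have "4 * (1 + 2*y + 2*y\<^sup>2) \<le> 4 * y * z" using False by (simp add: z_def algebra_simps power2_eq_square)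
    thus ?thesis using zp y by (simp add: divide_simps add_pos_pos)
  qed
  moreover have "4 / z + a\<^sup>2 * (z - 3) / 16 \<ge> a - 3 * a\<^sup>2 / 16"
  proof -
    have "4 / z + a\<^sup>2 * z / 16 - a = (a * z - 8)\<^sup>2 / (16 * z)" using zp
      by (simp add: field_simps power2_eq_square)
    hence "4 / z + a\<^sup>2 * z / 16 - a \<ge> 0" using zp by simp
    moreover have "a\<^sup>2 * (z - 3) / 16 = a\<^sup>2 * z / 16 - 3 * a\<^sup>2 / 16" by (simp add: field_simps)
    ultimately show ?thesis by linarith
  qed
  moreover have "a\<^sup>2 * y / 8 = a\<^sup>2 * (z - 3) / 16" by (simp add: z_def)
  moreover have "a - 3 * a\<^sup>2 / 16 \<ge> a - a\<^sup>2" using a by simp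
  ultimately show ?thesis by linarith
qed

lemma cmod_midpoint_minus_sq:
  fixes a b r :: complex
  shows "(cmod ((a + b)/2 - r))\<^sup>2 = ((cmod (a - r))\<^sup>2 + (cmod (b - r))\<^sup>2)/2 - (cmod (a - b))\<^sup>2 / 4"
  unfolding cmod_power2 by (simp add: power2_eq_square field_simps)

lemma cmod_midpoint_plus_sq:
  fixes a b r :: complex
  shows "(cmod ((a + b)/2 + r))\<^sup>2 = ((cmod (a + r))\<^sup>2 + (cmod (b + r))\<^sup>2)/2 - (cmod (a - b))\<^sup>2 / 4"
  using cmod_midpoint_minus_sq[of a b "-r"] by simp

lemma uniform_gap_of_continuous:
  fixes H :: "real \<Rightarrow> real"
  assumes cont: "continuous_on {x0..xb} H" and x: "x0 \<le> xb" and lt: "\<And>x. x \<ge> x0 \<Longrightarrow> H x < cc"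
    and tail: "\<And>x. x \<ge> xb \<Longrightarrow> H x \<le> cc/2" and c: "cc > 0"
  shows "\<exists>M. M < cc \<and> M \<ge> 0 \<and> (\<forall>x\<ge>x0. H x \<le> M)"
proof -
  obtain xs where xs: "xs \<in> {x0..xb}" "\<And>y. y \<in> {x0..xb} \<Longrightarrow> H y \<le> H xs"
    using continuous_attains_sup[OF compact_Icc _ cont] x by auto
  define M where "M = max (H xs) (cc/2)"
  have "H xs < cc" using lt xs(1) by simp
  hence "M < cc" using c by (simp add: M_def)
  moreover have "M \<ge> 0" using c by (simp add: M_def)
  moreover have "\<forall>x\<ge>x0. H x \<le> M"
  proof (intro allI impI)
    fix x assume "x \<ge> x0"
    show "H x \<le> M"
    proof (cases "x \<le> xb")
      case True thus ?thesis using xs(2)[of x] \<open>x \<ge> x0\<close> by (simp add: M_def)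
    next
      case False thus ?thesis using tail[of x] by (simp add: M_def)
    qed
  qed
  ultimately show ?thesis by blast
qed

lemma gain_lipschitz:
  fixes X Y p q \<eta> :: real
  assumes X: "X > 0" and p: "p \<ge> \<eta>" and q: "q \<ge> \<eta>" and eta: "\<eta> > 0"
  shows "\<bar>4*p*X / ((p + X)\<^sup>2 + Y\<^sup>2) - 4*q*X / ((q + X)\<^sup>2 + Y\<^sup>2)\<bar> \<le> 4 * \<bar>p - q\<bar> / \<eta>"
proof -
  define R where "R = X\<^sup>2 + Y\<^sup>2"
  define Dp where "Dp = (p + X)\<^sup>2 + Y\<^sup>2"
  define Dq where "Dq = (q + X)\<^sup>2 + Y\<^sup>2"
  have pp: "p > 0" and qp: "q > 0" using p q eta by auto
  have Rp: "R > 0" using X by (simp add: R_def add_pos_nonneg)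
  have Dp1: "Dp \<ge> R" and Dp2: "Dp \<ge> 2*p*X" and Dq1: "Dq \<ge> q\<^sup>2" and Dq2: "Dq \<ge> 2*q*X"
    using pp qp X by (simp_all add: Dp_def Dq_def R_def power2_eq_square algebra_simps add_nonneg_nonneg)
  have Dpp: "Dp > 0" using Dp1 Rp by simp
  have Dqp: "Dq > 0" using Dq2 qp X by (smt (verit) mult_pos_pos)
  have ident: "4*p*X / Dp - 4*q*X / Dq = 4 * X * (p - q) * (R - p*q) / (Dp * Dq)"
    using Dpp Dqp by (simp add: Dp_def Dq_def R_def field_simps power2_eq_square)
  have m1: "Dp * Dq \<ge> R * (2*q*X)" using Dp1 Dq2 Rp qp X by (intro mult_mono) auto
  have m2: "Dp * Dq \<ge> (2*p*X) * q\<^sup>2" using Dp2 Dq1 pp X Dpp by (intro mult_mono) auto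
  have key: "X * (R + p*q) * q \<le> Dp * Dq"
  proof -
    have "X * (R + p*q) * q = (R * (2*q*X) + (2*p*X) * q\<^sup>2) / 2" by (simp add: algebra_simps power2_eq_square)
    moreover have "(R * (2*q*X) + (2*p*X) * q\<^sup>2) / 2 \<le> (Dp * Dq + Dp * Dq) / 2"
      using add_mono[OF m1 m2] by (simp add: divide_right_mono)
    ultimately show ?thesis by simp
  qed
  have "\<bar>R - p*q\<bar> \<le> R + p*q" using Rp pp qp by (simp add: abs_le_iff)
  hence "\<bar>4 * X * (p - q) * (R - p*q)\<bar> \<le> 4 * X * \<bar>p - q\<bar> * (R + p*q)"
    using X by (simp add: abs_mult mult_left_mono)
  hence "\<bar>4 * X * (p - q) * (R - p*q) / (Dp * Dq)\<bar> \<le> 4 * X * \<bar>p - q\<bar> * (R + p*q) / (Dp * Dq)"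
    using Dpp Dqp by (simp add: abs_divide divide_right_mono)
  also have "\<dots> = (4 * \<bar>p - q\<bar> * ((X * (R + p*q) * q) / (Dp * Dq))) / q" using qp Dpp Dqp by (simp add: field_simps)
  also have "\<dots> \<le> 4 * \<bar>p - q\<bar> * 1 / q"
  proof -
    have "(X * (R + p*q) * q) / (Dp * Dq) \<le> 1" using key Dpp Dqp by simp
    hence "4 * \<bar>p - q\<bar> * ((X * (R + p*q) * q) / (Dp * Dq)) \<le> 4 * \<bar>p - q\<bar> * 1" by (intro mult_left_mono) auto
    thus ?thesis by (rule divide_right_mono) (use qp in simp)
  qed
  also have "\<dots> \<le> 4 * \<bar>p - q\<bar> / \<eta>" using q eta by (simp add: divide_left_mono)
  finally have fin: "\<bar>4 * X * (p - q) * (R - p*q) / (Dp * Dq)\<bar> \<le> 4 * \<bar>p - q\<bar> / \<eta>" .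
  show ?thesis unfolding Dp_def[symmetric] Dq_def[symmetric] ident by (rule fin)
qed

lemma localization_ineq_aux:
  fixes a b X0 Y0 u :: real
  assumes h1: "(a - X0)\<^sup>2 + (b - Y0)\<^sup>2 \<le> u * ((a + X0)\<^sup>2 + (b + Y0)\<^sup>2)"
    and h2: "(a - X0)\<^sup>2 + (b + Y0)\<^sup>2 \<le> u * ((a + X0)\<^sup>2 + (b - Y0)\<^sup>2)"
  shows "(1 - u) * (a\<^sup>2 + b\<^sup>2 + X0\<^sup>2 + Y0\<^sup>2) \<le> 2 * a * X0 * (1 + u)"
proof -
  define S where "S = a\<^sup>2 + b\<^sup>2 + X0\<^sup>2 + Y0\<^sup>2"
  have "((a - X0)\<^sup>2 + (b - Y0)\<^sup>2) + ((a - X0)\<^sup>2 + (b + Y0)\<^sup>2) = 2 * S - 4 * a * X0"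
    by (simp add: S_def power2_eq_square algebra_simps)
  moreover have "u * ((a + X0)\<^sup>2 + (b + Y0)\<^sup>2) + u * ((a + X0)\<^sup>2 + (b - Y0)\<^sup>2) = u * (2 * S + 4 * a * X0)"
    by (simp add: S_def power2_eq_square algebra_simps)
  ultimately have "2 * S - 4 * a * X0 \<le> u * (2 * S + 4 * a * X0)" using add_mono[OF h1 h2] by simp
  then show ?thesis by (simp add: S_def algebra_simps)
qed

lemma localization_ineq:
  fixes a b X0 Y0 t :: real
  assumes h1: "(a - X0)\<^sup>2 + (b - Y0)\<^sup>2 \<le> t\<^sup>2 * ((a + X0)\<^sup>2 + (b + Y0)\<^sup>2)"
    and h2: "(a - X0)\<^sup>2 + (b + Y0)\<^sup>2 \<le> t\<^sup>2 * ((a + X0)\<^sup>2 + (b - Y0)\<^sup>2)"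
    and X0: "X0 > 0" and t: "t \<ge> 0" "t < 1"
  shows "a \<ge> (1 - t\<^sup>2) * X0 / (2 * (1 + t\<^sup>2))" "sqrt (a\<^sup>2 + b\<^sup>2) \<le> 2 * X0 * (1 + t\<^sup>2) / (1 - t\<^sup>2)"
proof -
  define u where "u = t\<^sup>2"
  define n where "n = sqrt (a\<^sup>2 + b\<^sup>2)"
  have u: "u \<ge> 0" "u < 1" using t by (simp_all add: u_def power_less_one_iff)
  have main: "(1 - u) * (a\<^sup>2 + b\<^sup>2 + X0\<^sup>2 + Y0\<^sup>2) \<le> 2 * a * X0 * (1 + u)"
    using localization_ineq_aux[OF h1 h2] by (simp add: u_def)
  have "(1 - u) * X0\<^sup>2 \<le> (1 - u) * (a\<^sup>2 + b\<^sup>2 + X0\<^sup>2 + Y0\<^sup>2)" using u by (intro mult_left_mono) auto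
  then have "((1 - u) * X0) * X0 \<le> (2 * a * (1 + u)) * X0" using main by (simp add: power2_eq_square algebra_simps)
  then have "(1 - u) * X0 \<le> 2 * a * (1 + u)" using X0 by simp
  then show "a \<ge> (1 - t\<^sup>2) * X0 / (2 * (1 + t\<^sup>2))" using u by (simp add: u_def[symmetric] pos_divide_le_eq algebra_simps)
  have n2: "n\<^sup>2 = a\<^sup>2 + b\<^sup>2" by (simp add: n_def)
  have "(1 - u) * n\<^sup>2 \<le> (1 - u) * (a\<^sup>2 + b\<^sup>2 + X0\<^sup>2 + Y0\<^sup>2)" using u n2 by (intro mult_left_mono) auto
  also have "\<dots> \<le> 2 * a * X0 * (1 + u)" by (rule main)
  also have "\<dots> \<le> 2 * n * X0 * (1 + u)" using real_sqrt_sum_squares_ge1[of a b] X0 u by (simp add: n_def)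
  finally have hn: "((1 - u) * n) * n \<le> (2 * X0 * (1 + u)) * n" by (simp add: power2_eq_square algebra_simps)
  have "(1 - u) * n \<le> 2 * X0 * (1 + u)"
  proof (cases "n = 0")
    case False
    moreover have "n \<ge> 0" by (simp add: n_def)
    ultimately have "n > 0" by linarith
    then show ?thesis using hn by simp
  qed (use X0 u in simp)
  then show "sqrt (a\<^sup>2 + b\<^sup>2) \<le> 2 * X0 * (1 + t\<^sup>2) / (1 - t\<^sup>2)"
    using u by (simp add: u_def[symmetric] n_def[symmetric] pos_le_divide_eq algebra_simps)
qed

text \<open>Bounds, in terms of \<open>a = A / p0(L)\<close>, on \<open>p\<^sup>* / p0\<close> (\<open>ratio_lo\<close>, \<open>ratio_hi\<close>) and on
  \<open>2 p\<^sup>* (1 - \<delta>\<^sup>*) / A\<close> (\<open>gain_lo\<close>, \<open>gain_hi\<close>).\<close>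

definition ratio_hi :: "real \<Rightarrow> real" where "ratio_hi a = a / (1 - exp (-(a - a\<^sup>2) + a^3/32))"
definition ratio_lo :: "real \<Rightarrow> real" where "ratio_lo a = (1 - exp (-a/2 + a\<^sup>2)) * (2/a - a\<^sup>2)"
definition gain_lo :: "real \<Rightarrow> real" where "gain_lo a = 2 * ratio_lo a * (1 - exp (-(a - a\<^sup>2)/2)) / a"
definition gain_hi :: "real \<Rightarrow> real" where "gain_hi a = 2 * ratio_hi a * (1 - sqrt ((1 - a / ratio_lo a) * exp (- (a^3/32)))) / a"

lemma bound_funs_tendsto_1: "(ratio_hi \<longlongrightarrow> 1) (at_right 0)" "(ratio_lo \<longlongrightarrow> 1) (at_right 0)" "(gain_lo \<longlongrightarrow> 1) (at_right 0)" "(gain_hi \<longlongrightarrow> 1) (at_right 0)"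
  unfolding ratio_hi_def ratio_lo_def gain_lo_def gain_hi_def by real_asymp+

lemma eventually_small_a: "eventually (\<lambda>a::real. a - a\<^sup>2 - a^3/32 > 0 \<and> a/2 - a\<^sup>2 > 0 \<and> ratio_lo a > a) (at_right 0)"
proof -
  have "eventually (\<lambda>a::real. a - a\<^sup>2 - a^3/32 > 0) (at_right 0)" by real_asymp
  moreover have "eventually (\<lambda>a::real. a/2 - a\<^sup>2 > 0) (at_right 0)" by real_asymp
  moreover have "eventually (\<lambda>a::real. ratio_lo a > a) (at_right 0)" unfolding ratio_lo_def by real_asymp
  ultimately show ?thesis by eventually_elim auto
qed

lemma asymp_equiv_complex_of_real:
  assumes "((\<lambda>x. f x / g x) \<longlongrightarrow> 1) F"
  shows "(\<lambda>x. complex_of_real (f x)) \<sim>[F] (\<lambda>x. complex_of_real (g x))"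
proof (rule asymp_equivI')
  show "((\<lambda>x. complex_of_real (f x) / complex_of_real (g x)) \<longlongrightarrow> 1) F"
    using tendsto_of_real[OF assms, where 'a = complex] by simp
qed

section \<open>The minimum of \<open>Re \<lambda>\<close> over \<open>D\<^sup>\<infinity>\<close>\<close>

locale robin_setting =
  fixes \<nu> c x0sq \<omega>m km :: real
  assumes nu_pos: "\<nu> > 0" and x0_nn: "x0sq \<ge> 0" and km_nn: "km \<ge> 0" and wm_pos: "\<omega>m > 0"
begin

definition radicand :: "real \<Rightarrow> real \<Rightarrow> complex" where
  "radicand \<omega> k = complex_of_real x0sq + 4 * complex_of_real \<nu> * (complex_of_real (\<nu> * k\<^sup>2) + \<i> * complex_of_real (\<omega> + c * k))"

definition sqrt_rad :: "real \<Rightarrow> real \<Rightarrow> complex" where "sqrt_rad \<omega> k = csqrt (radicand \<omega> k)"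

lemma Re_radicand: "Re (radicand \<omega> k) = x0sq + 4 * \<nu>\<^sup>2 * k\<^sup>2"
  by (simp add: radicand_def power2_eq_square)
lemma Im_radicand: "Im (radicand \<omega> k) = 4 * \<nu> * (\<omega> + c * k)"
  by (simp add: radicand_def)

lemma rho_Robin_eq: "rho \<nu> c x0sq \<omega> k p 0 L = ((p - sqrt_rad \<omega> k) / (p + sqrt_rad \<omega> k)) * exp (- complex_of_real (L / (2 * \<nu>)) * sqrt_rad \<omega> k)"
  by (simp add: rho_def sqrt_rad_def radicand_def Let_def)

lemma norm_rho_Robin: "cmod (rho \<nu> c x0sq \<omega> k p 0 L) = cmod (p - sqrt_rad \<omega> k) / cmod (p + sqrt_rad \<omega> k) * exp (- (L / (2 * \<nu>)) * Re (sqrt_rad \<omega> k))"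
  by (simp add: rho_Robin_eq norm_mult norm_divide norm_exp_eq_Re)

lemma Re_sq_minus_Im_sq_sqrt_rad: "(Re (sqrt_rad \<omega> k))\<^sup>2 - (Im (sqrt_rad \<omega> k))\<^sup>2 = x0sq + 4 * \<nu>\<^sup>2 * k\<^sup>2"
proof -
  have "(sqrt_rad \<omega> k)\<^sup>2 = radicand \<omega> k" by (simp add: sqrt_rad_def)
  hence "Re ((sqrt_rad \<omega> k)\<^sup>2) = x0sq + 4 * \<nu>\<^sup>2 * k\<^sup>2" by (simp add: Re_radicand)
  thus ?thesis by (simp add: power2_eq_square)
qed

lemma Re_mult_Im_sqrt_rad: "2 * Re (sqrt_rad \<omega> k) * Im (sqrt_rad \<omega> k) = 4 * \<nu> * (\<omega> + c * k)"
proof -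
  have "(sqrt_rad \<omega> k)\<^sup>2 = radicand \<omega> k" by (simp add: sqrt_rad_def)
  hence "Im ((sqrt_rad \<omega> k)\<^sup>2) = 4 * \<nu> * (\<omega> + c * k)" by (simp add: Im_radicand)
  thus ?thesis by (simp add: power2_eq_square)
qed

lemma Im_sq_le_Re_sq_sqrt_rad: "(Im (sqrt_rad \<omega> k))\<^sup>2 \<le> (Re (sqrt_rad \<omega> k))\<^sup>2"
  using Re_sq_minus_Im_sq_sqrt_rad[of \<omega> k] x0_nn by (smt (verit) zero_le_power2 mult_nonneg_nonneg nu_pos)

lemma Re_sqrt_rad: "Re (sqrt_rad \<omega> k) = sqrt ((cmod (radicand \<omega> k) + Re (radicand \<omega> k)) / 2)"
  by (simp add: sqrt_rad_def)

lemma cmod_radicand: "cmod (radicand \<omega> k) = sqrt ((x0sq + 4 * \<nu>\<^sup>2 * k\<^sup>2)\<^sup>2 + 16 * \<nu>\<^sup>2 * (\<omega> + c * k)\<^sup>2)"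
  unfolding cmod_def Re_radicand Im_radicand by (simp add: power_mult_distrib)

lemma Re_sqrt_rad_pos: assumes "(\<omega>, k) \<in> Dinf \<omega>m km" shows "Re (sqrt_rad \<omega> k) > 0"
proof -
  have w: "\<omega>m \<le> \<bar>\<omega>\<bar>" using assms by (simp add: Dinf_def)
  have "cmod (radicand \<omega> k) + Re (radicand \<omega> k) > 0"
  proof (cases "k = 0")
    case True
    hence "Im (radicand \<omega> k) \<noteq> 0" using w wm_pos nu_pos by (simp add: Im_radicand)
    hence "cmod (radicand \<omega> k) > \<bar>Re (radicand \<omega> k)\<bar>"
      unfolding cmod_def by (metis abs_of_nonneg real_sqrt_abs real_sqrt_less_iff less_add_same_cancel1 zero_less_power2 zero_le_power2 real_sqrt_ge_zero)
    thus ?thesis by linarith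
  next
    case False
    hence "Re (radicand \<omega> k) > 0" using x0_nn nu_pos by (simp add: Re_radicand add_nonneg_pos)
    moreover have "cmod (radicand \<omega> k) \<ge> 0" by simp
    ultimately show ?thesis by linarith
  qed
  thus ?thesis by (simp add: Re_sqrt_rad)
qed

lemma phi_eq_Re_sqrt_rad: assumes "k'\<^sup>2 = k\<^sup>2" "(\<omega> + c * k)\<^sup>2 = \<xi>\<^sup>2"
  shows "phi \<nu> x0sq k' \<xi> = 4 * Re (sqrt_rad \<omega> k)"
proof -
  have "Re (sqrt_rad \<omega> k) = sqrt ((sqrt ((x0sq + 4 * \<nu>\<^sup>2 * k'\<^sup>2)\<^sup>2 + 16 * \<nu>\<^sup>2 * \<xi>\<^sup>2) + x0sq + 4 * \<nu>\<^sup>2 * k'\<^sup>2) / 2)"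
    using assms by (simp add: Re_sqrt_rad cmod_radicand Re_radicand add.assoc)
  moreover have "\<And>v. 4 * sqrt (v / 2) = 2 * sqrt 2 * sqrt v"
    by (simp add: real_sqrt_divide field_simps)
  ultimately show ?thesis by (simp add: phi_def)
qed

text \<open>\<open>X\<^sup>2\<close> is the positive root of \<open>T\<^sup>2 - (x0sq + 4 \<nu>\<^sup>2 k\<^sup>2) T - 4 \<nu>\<^sup>2 (\<omega> + c k)\<^sup>2\<close>, so comparing
  \<open>X\<close> with \<open>X0\<close> amounts to comparing \<open>k\<^sup>2 + (\<omega> + c k)\<^sup>2 / X0\<^sup>2\<close> with its value at a point
  where \<open>X = X0\<close>: minimising \<open>X\<close> over \<open>D\<^sup>\<infinity>\<close> becomes minimising a quadratic form.\<close>

lemma Re_sqrt_rad_ge: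
  assumes X0: "X0 > 0" and q: "x0sq + 4 * \<nu>\<^sup>2 * k\<^sup>2 + 4 * \<nu>\<^sup>2 * (\<omega> + c*k)\<^sup>2 / X0\<^sup>2 \<ge> X0\<^sup>2"
  shows "Re (sqrt_rad \<omega> k) \<ge> X0"
proof (rule ccontr)
  define X where "X = Re (sqrt_rad \<omega> k)"
  define Y where "Y = Im (sqrt_rad \<omega> k)"
  assume "\<not> X0 \<le> Re (sqrt_rad \<omega> k)"
  hence lt: "X < X0" by (simp add: X_def)
  have X0': "X \<ge> 0" unfolding X_def sqrt_rad_def by (rule Re_csqrt)
  have e1: "X\<^sup>2 - Y\<^sup>2 = x0sq + 4 * \<nu>\<^sup>2 * k\<^sup>2" using Re_sq_minus_Im_sq_sqrt_rad by (simp add: X_def Y_def)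
  have e2: "X * Y = 2 * \<nu> * (\<omega> + c*k)" using Re_mult_Im_sqrt_rad[of \<omega> k] unfolding X_def Y_def by linarith
  have "4 * \<nu>\<^sup>2 * (\<omega> + c*k)\<^sup>2 = (X*Y)\<^sup>2" using e2 by (simp add: power_mult_distrib)
  hence "X\<^sup>2 - Y\<^sup>2 + (X*Y)\<^sup>2 / X0\<^sup>2 \<ge> X0\<^sup>2" using q e1 by simp
  hence "(X\<^sup>2 - Y\<^sup>2 + (X*Y)\<^sup>2 / X0\<^sup>2) * X0\<^sup>2 \<ge> X0\<^sup>2 * X0\<^sup>2"
    by (intro mult_right_mono) auto
  moreover have "(X\<^sup>2 - Y\<^sup>2 + (X*Y)\<^sup>2 / X0\<^sup>2) * X0\<^sup>2 = (X\<^sup>2 - Y\<^sup>2) * X0\<^sup>2 + (X*Y)\<^sup>2"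
    using X0 by (simp add: distrib_right)
  moreover have "(X0\<^sup>2 - X\<^sup>2) * (X0\<^sup>2 + Y\<^sup>2) = X0\<^sup>2 * X0\<^sup>2 - ((X\<^sup>2 - Y\<^sup>2) * X0\<^sup>2 + (X*Y)\<^sup>2)"
    by (simp add: algebra_simps power2_eq_square)
  ultimately have le: "(X0\<^sup>2 - X\<^sup>2) * (X0\<^sup>2 + Y\<^sup>2) \<le> 0" by linarith
  have "X\<^sup>2 < X0\<^sup>2" using lt X0' by (simp add: power_strict_mono)
  hence "(X0\<^sup>2 - X\<^sup>2) * (X0\<^sup>2 + Y\<^sup>2) > 0" using X0 by (intro mult_pos_pos) (auto simp: add_pos_nonneg)
  thus False using le by linarith
qed

lemma Re_sqrt_rad_eq:
  assumes X0: "Re (sqrt_rad \<omega> k) = X0" "X0 > 0"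
  shows "x0sq + 4 * \<nu>\<^sup>2 * k\<^sup>2 + 4 * \<nu>\<^sup>2 * (\<omega> + c*k)\<^sup>2 / X0\<^sup>2 = X0\<^sup>2"
proof -
  define Y where "Y = Im (sqrt_rad \<omega> k)"
  have e1: "X0\<^sup>2 - Y\<^sup>2 = x0sq + 4 * \<nu>\<^sup>2 * k\<^sup>2" using Re_sq_minus_Im_sq_sqrt_rad[of \<omega> k] X0 by (simp add: Y_def)
  have e2: "X0 * Y = 2 * \<nu> * (\<omega> + c*k)" using Re_mult_Im_sqrt_rad[of \<omega> k] X0 unfolding Y_def by (simp add: algebra_simps)
  have "4 * \<nu>\<^sup>2 * (\<omega> + c*k)\<^sup>2 = (X0*Y)\<^sup>2" using e2 by (simp add: power_mult_distrib)
  thus ?thesis using e1 X0 by (simp add: power_mult_distrib)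
qed

lemma Re_sqrt_rad_ge_witness:
  assumes w0: "(\<omega>0, k0) \<in> Dinf \<omega>m km" and X0: "Re (sqrt_rad \<omega>0 k0) = X0"
    and Q: "\<And>K \<xi>. K \<ge> km \<Longrightarrow> \<omega>m - \<bar>c\<bar> * K \<le> \<bar>\<xi>\<bar> \<Longrightarrow> K\<^sup>2 + \<xi>\<^sup>2 / X0\<^sup>2 \<ge> k0\<^sup>2 + (\<omega>0 + c*k0)\<^sup>2 / X0\<^sup>2"
    and w: "(\<omega>, k) \<in> Dinf \<omega>m km"
  shows "Re (sqrt_rad \<omega> k) \<ge> X0"
proof -
  have X0p: "X0 > 0" using Re_sqrt_rad_pos[OF w0] X0 by simp
  have wk: "\<omega>m \<le> \<bar>\<omega>\<bar>" "km \<le> \<bar>k\<bar>" using w by (auto simp: Dinf_def)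
  have "\<bar>\<omega> + c*k\<bar> \<ge> \<bar>\<omega>\<bar> - \<bar>c\<bar> * \<bar>k\<bar>" by (simp add: abs_mult[symmetric])
  hence "\<omega>m - \<bar>c\<bar> * \<bar>k\<bar> \<le> \<bar>\<omega> + c*k\<bar>" using wk by linarith
  from Q[OF wk(2) this] have "\<bar>k\<bar>\<^sup>2 + (\<omega> + c*k)\<^sup>2 / X0\<^sup>2 \<ge> k0\<^sup>2 + (\<omega>0 + c*k0)\<^sup>2 / X0\<^sup>2" by simp
  hence "k\<^sup>2 + (\<omega> + c*k)\<^sup>2 / X0\<^sup>2 \<ge> k0\<^sup>2 + (\<omega>0 + c*k0)\<^sup>2 / X0\<^sup>2" by simp
  hence "4*\<nu>\<^sup>2 * (k\<^sup>2 + (\<omega> + c*k)\<^sup>2 / X0\<^sup>2) \<ge> 4*\<nu>\<^sup>2 * (k0\<^sup>2 + (\<omega>0 + c*k0)\<^sup>2 / X0\<^sup>2)"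
    by (simp add: mult_left_mono)
  hence "x0sq + 4 * \<nu>\<^sup>2 * k\<^sup>2 + 4 * \<nu>\<^sup>2 * (\<omega> + c*k)\<^sup>2 / X0\<^sup>2 \<ge> x0sq + 4 * \<nu>\<^sup>2 * k0\<^sup>2 + 4 * \<nu>\<^sup>2 * (\<omega>0 + c*k0)\<^sup>2 / X0\<^sup>2"
    by (simp add: algebra_simps)
  also have "x0sq + 4 * \<nu>\<^sup>2 * k0\<^sup>2 + 4 * \<nu>\<^sup>2 * (\<omega>0 + c*k0)\<^sup>2 / X0\<^sup>2 = X0\<^sup>2" by (rule Re_sqrt_rad_eq[OF X0 X0p])
  finally show ?thesis by (rule Re_sqrt_rad_ge[OF X0p])
qed

lemma Re_sqrt_rad_quartic:
  assumes X0: "Re (sqrt_rad \<omega> k) = X0" "X0 > 0"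
  shows "(X0\<^sup>2)\<^sup>2 - (x0sq + 4 * \<nu>\<^sup>2 * k\<^sup>2) * X0\<^sup>2 - 4 * \<nu>\<^sup>2 * (\<omega> + c*k)\<^sup>2 = 0"
proof -
  have e: "x0sq + 4 * \<nu>\<^sup>2 * k\<^sup>2 + 4 * \<nu>\<^sup>2 * (\<omega> + c*k)\<^sup>2 / X0\<^sup>2 = X0\<^sup>2" by (rule Re_sqrt_rad_eq[OF X0])
  have "(x0sq + 4 * \<nu>\<^sup>2 * k\<^sup>2 + 4 * \<nu>\<^sup>2 * (\<omega> + c*k)\<^sup>2 / X0\<^sup>2) * X0\<^sup>2 = (x0sq + 4 * \<nu>\<^sup>2 * k\<^sup>2) * X0\<^sup>2 + 4 * \<nu>\<^sup>2 * (\<omega> + c*k)\<^sup>2"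
    using X0 by (simp add: distrib_right)
  hence "X0\<^sup>2 * X0\<^sup>2 = (x0sq + 4 * \<nu>\<^sup>2 * k\<^sup>2) * X0\<^sup>2 + 4 * \<nu>\<^sup>2 * (\<omega> + c*k)\<^sup>2" using e by simp
  thus ?thesis by (simp add: power2_eq_square)
qed

definition sign_c :: real where "sign_c = (if c \<ge> 0 then 1 else -1)"

lemma c_mult_sign_c: "c * (sign_c * k) = \<bar>c\<bar> * k" and sign_c_mult_sq: "(sign_c * k)\<^sup>2 = k\<^sup>2"
  by (auto simp: sign_c_def)

text \<open>For \<open>\<omega> = -\<omega>m\<close> and \<open>k = sign_c * k0\<close> the quadratic form of \<open>Re_sqrt_rad_ge\<close> becomes
  \<open>K\<^sup>2 + (\<omega>m - \<bar>c\<bar> K)\<^sup>2 / X0\<^sup>2\<close>; \<open>band_poly k0 = 0\<close> says that \<open>k0\<close> is its critical point, and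
  \<open>kbar\<close> is the positive root of \<open>band_poly\<close>.\<close>

definition band_poly :: "real \<Rightarrow> real" where
  "band_poly k = 4 * \<nu>\<^sup>2 * \<omega>m * k\<^sup>2 + \<bar>c\<bar> * (c\<^sup>2 + x0sq) * k - c\<^sup>2 * \<omega>m"

lemma band_poly_kbar: "band_poly (kbar \<nu> c x0sq \<omega>m) = 0"
  using kbar_props(2)[OF nu_pos x0_nn wm_pos, of c] by (simp add: band_poly_def power2_abs)

lemma band_poly_nonneg:
  assumes "kbar \<nu> c x0sq \<omega>m \<le> k"
  shows "band_poly k \<ge> 0"
proof -
  define kb where "kb = kbar \<nu> c x0sq \<omega>m"
  have "band_poly k - band_poly kb = (k - kb) * (4 * \<nu>\<^sup>2 * \<omega>m * (k + kb) + \<bar>c\<bar> * (c\<^sup>2 + x0sq))"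
    by (simp add: band_poly_def algebra_simps power2_eq_square)
  moreover have "(k - kb) * (4 * \<nu>\<^sup>2 * \<omega>m * (k + kb) + \<bar>c\<bar> * (c\<^sup>2 + x0sq)) \<ge> 0"
    using assms kbar_props(1)[OF nu_pos x0_nn wm_pos, of c] wm_pos x0_nn
    by (intro mult_nonneg_nonneg add_nonneg_nonneg) (auto simp: kb_def)
  ultimately show ?thesis using band_poly_kbar by (simp add: kb_def)
qed

lemma abs_c_mult_kbar_le: "\<bar>c\<bar> * kbar \<nu> c x0sq \<omega>m \<le> \<omega>m"
proof (cases "c = 0")
  case False
  define kb where "kb = kbar \<nu> c x0sq \<omega>m"
  have "c\<^sup>2 * (\<omega>m - \<bar>c\<bar> * kb) = 4 * \<nu>\<^sup>2 * \<omega>m * kb\<^sup>2 + \<bar>c\<bar> * x0sq * kb"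
    using band_poly_kbar by (simp add: band_poly_def kb_def algebra_simps power2_eq_square power2_abs)
  also have "\<dots> \<ge> 0" using kbar_props(1)[OF nu_pos x0_nn wm_pos, of c] wm_pos x0_nn by (simp add: kb_def)
  finally show ?thesis using False by (simp add: zero_le_mult_iff kb_def)
qed (use wm_pos in simp)

lemma band_witness_in_Dinf: "km \<le> k0 \<Longrightarrow> (-\<omega>m, sign_c * k0) \<in> Dinf \<omega>m km"
  using wm_pos by (auto simp: Dinf_def sign_c_def)

lemma band_stationarity:
  assumes k0: "km \<le> k0" "k0 > 0" and band: "\<bar>c\<bar> * k0 \<le> \<omega>m" and P: "band_poly k0 \<ge> 0"
  defines "X0 \<equiv> Re (sqrt_rad (-\<omega>m) (sign_c * k0))"
  shows "\<bar>c\<bar> * \<omega>m \<le> k0 * (X0\<^sup>2 + c\<^sup>2)"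
    and "band_poly k0 = 0 \<Longrightarrow> k0 * (X0\<^sup>2 + c\<^sup>2) = \<bar>c\<bar> * \<omega>m"
proof -
  define C where "C = \<bar>c\<bar>"
  define T where "T = C * (\<omega>m - C * k0) / k0"
  have X0p: "X0 > 0" using Re_sqrt_rad_pos[OF band_witness_in_Dinf[OF k0(1)]] by (simp add: X0_def)
  have wp: "(X0\<^sup>2)\<^sup>2 - (x0sq + 4 * \<nu>\<^sup>2 * k0\<^sup>2) * X0\<^sup>2 - 4 * \<nu>\<^sup>2 * (\<omega>m - C * k0)\<^sup>2 = 0"
    using Re_sqrt_rad_quartic[of "-\<omega>m" "sign_c * k0" X0] X0p
    by (simp add: X0_def C_def c_mult_sign_c sign_c_mult_sq power2_commute)
  have eT: "T\<^sup>2 - (x0sq + 4 * \<nu>\<^sup>2 * k0\<^sup>2) * T - 4 * \<nu>\<^sup>2 * (\<omega>m - C * k0)\<^sup>2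
      = - (\<omega>m - C * k0) * band_poly k0 / k0\<^sup>2"
    using quartic_factor_identity[of k0 C \<omega>m x0sq \<nu>] k0 by (simp add: T_def C_def band_poly_def power2_abs)
  have q: "4 * \<nu>\<^sup>2 * (\<omega>m - C * k0)\<^sup>2 \<ge> 0" by simp
  have T_eq: "k0 * (T + c\<^sup>2) = C * \<omega>m" using k0 by (simp add: T_def C_def field_simps power2_eq_square)
  have "(C * k0 - \<omega>m) * band_poly k0 / k0\<^sup>2 \<le> 0"
    using band P by (simp add: C_def mult_nonpos_nonneg divide_nonpos_nonneg)
  then have "T \<le> X0\<^sup>2"
    by (intro le_pos_root_quadratic[OF _ wp q]) (use X0p k0 band eT in \<open>auto simp: T_def C_def\<close>)
  then show "\<bar>c\<bar> * \<omega>m \<le> k0 * (X0\<^sup>2 + c\<^sup>2)"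
    using T_eq k0 mult_left_mono[of "T + c\<^sup>2" "X0\<^sup>2 + c\<^sup>2" k0] by (simp add: C_def)
  assume P0: "band_poly k0 = 0"
  \<comment> \<open>\<open>c \<noteq> 0\<close> and \<open>\<bar>c\<bar> k0 < \<omega>m\<close> follow from \<open>c\<^sup>2 (\<omega>m - \<bar>c\<bar> k0) = 4 \<nu>\<^sup>2 \<omega>m k0\<^sup>2 + \<bar>c\<bar> x0sq k0 > 0\<close>\<close>
  have "c\<^sup>2 * (\<omega>m - C * k0) = 4 * \<nu>\<^sup>2 * \<omega>m * k0\<^sup>2 + C * x0sq * k0"
    using P0 by (simp add: band_poly_def C_def algebra_simps power2_eq_square power2_abs)
  also have "\<dots> > 0" using nu_pos wm_pos k0 x0_nn by (simp add: add_pos_nonneg C_def)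
  finally have "C > 0" "\<omega>m - C * k0 > 0"
    by (auto simp: zero_less_mult_iff C_def)
  hence Tp: "T > 0" using k0 by (simp add: T_def)
  have "X0\<^sup>2 \<le> T"
    by (rule le_pos_root_quadratic[OF Tp, where a = "x0sq + 4 * \<nu>\<^sup>2 * k0\<^sup>2" and q = "4 * \<nu>\<^sup>2 * (\<omega>m - C * k0)\<^sup>2"])
       (use eT P0 wp X0p in auto)
  with \<open>T \<le> X0\<^sup>2\<close> show "k0 * (X0\<^sup>2 + c\<^sup>2) = \<bar>c\<bar> * \<omega>m" using T_eq by (simp add: C_def)
qed

lemma Re_sqrt_rad_min_on_band:
  assumes k0: "km \<le> k0" "\<bar>c\<bar> * k0 \<le> \<omega>m" and kmC: "\<bar>c\<bar> > 0 \<Longrightarrow> \<bar>c\<bar> * km \<le> \<omega>m"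
    and H: "\<And>K. km \<le> K \<Longrightarrow> \<bar>c\<bar> * K \<le> \<omega>m \<Longrightarrow>
      k0\<^sup>2 + (\<omega>m - \<bar>c\<bar> * k0)\<^sup>2 / (Re (sqrt_rad (-\<omega>m) (sign_c * k0)))\<^sup>2
        \<le> K\<^sup>2 + (\<omega>m - \<bar>c\<bar> * K)\<^sup>2 / (Re (sqrt_rad (-\<omega>m) (sign_c * k0)))\<^sup>2"
    and w: "(\<omega>, k) \<in> Dinf \<omega>m km"
  shows "Re (sqrt_rad (-\<omega>m) (sign_c * k0)) \<le> Re (sqrt_rad \<omega> k)"
proof (rule Re_sqrt_rad_ge_witness[OF band_witness_in_Dinf[OF k0(1)] refl _ w])
  define X0 where "X0 = Re (sqrt_rad (-\<omega>m) (sign_c * k0))"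
  have X0p: "X0 > 0" using Re_sqrt_rad_pos[OF band_witness_in_Dinf[OF k0(1)]] by (simp add: X0_def)
  fix K \<xi> assume K: "K \<ge> km" "\<omega>m - \<bar>c\<bar> * K \<le> \<bar>\<xi>\<bar>"
  have "K\<^sup>2 + \<xi>\<^sup>2 / X0\<^sup>2 \<ge> k0\<^sup>2 + (\<omega>m - \<bar>c\<bar> * k0)\<^sup>2 / X0\<^sup>2"
    by (rule quad_form_min_extend[where km=km]) (use X0p wm_pos k0 kmC H K km_nn in \<open>auto simp: X0_def\<close>)
  then show "K\<^sup>2 + \<xi>\<^sup>2 / X0\<^sup>2 \<ge> (sign_c * k0)\<^sup>2 + (-\<omega>m + c * (sign_c * k0))\<^sup>2 / X0\<^sup>2"
    by (simp add: c_mult_sign_c sign_c_mult_sq power2_commute)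
qed

lemma Re_sqrt_rad_min_at_kbar:
  assumes km: "km \<le> kbar \<nu> c x0sq \<omega>m" and w: "(\<omega>, k) \<in> Dinf \<omega>m km"
  shows "Re (sqrt_rad (-\<omega>m) (sign_c * kbar \<nu> c x0sq \<omega>m)) \<le> Re (sqrt_rad \<omega> k)"
proof -
  define kb where "kb = kbar \<nu> c x0sq \<omega>m"
  define X0 where "X0 = Re (sqrt_rad (-\<omega>m) (sign_c * kb))"
  have X0p: "X0 > 0" using Re_sqrt_rad_pos[OF band_witness_in_Dinf[OF km]] by (simp add: X0_def kb_def)
  have band: "\<bar>c\<bar> * kb \<le> \<omega>m" using abs_c_mult_kbar_le by (simp add: kb_def)
  have kmC: "\<bar>c\<bar> * km \<le> \<omega>m" using mult_left_mono[OF km, of "\<bar>c\<bar>"] band by (simp add: kb_def)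
  have stat: "kb * (X0\<^sup>2 + \<bar>c\<bar>\<^sup>2) = \<bar>c\<bar> * \<omega>m"
  proof (cases "c = 0")
    case True
    then show ?thesis using kbar_props(3)[OF nu_pos x0_nn wm_pos, of c] by (simp add: kb_def)
  next
    case False
    then have "kb > 0" using kbar_props(1,3)[OF nu_pos x0_nn wm_pos, of c] by (simp add: kb_def)
    then show ?thesis using band_stationarity(2)[of kb] km band band_poly_kbar
      by (simp add: X0_def kb_def)
  qed
  show ?thesis unfolding kb_def[symmetric]
    by (rule Re_sqrt_rad_min_on_band[OF km[folded kb_def] _ _ _ w])
       (use band kmC quad_form_min_stationary[of "X0\<^sup>2" kb "\<bar>c\<bar>" \<omega>m] X0p stat
        in \<open>auto simp: X0_def\<close>)
qed

lemma Re_sqrt_rad_min_at_km: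
  assumes km: "kbar \<nu> c x0sq \<omega>m < km" "\<bar>c\<bar> * km \<le> \<omega>m" and w: "(\<omega>, k) \<in> Dinf \<omega>m km"
  shows "Re (sqrt_rad (-\<omega>m) (sign_c * km)) \<le> Re (sqrt_rad \<omega> k)"
proof -
  define X0 where "X0 = Re (sqrt_rad (-\<omega>m) (sign_c * km))"
  have X0p: "X0 > 0" using Re_sqrt_rad_pos[OF band_witness_in_Dinf[of km]] by (simp add: X0_def)
  have kmp: "km > 0" using km(1) kbar_props(1)[OF nu_pos x0_nn wm_pos, of c] by linarith
  have stat: "\<bar>c\<bar> * \<omega>m \<le> km * (X0\<^sup>2 + \<bar>c\<bar>\<^sup>2)"
    using band_stationarity(1)[of km] kmp km band_poly_nonneg[of km] by (simp add: X0_def)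
  show ?thesis
    by (rule Re_sqrt_rad_min_on_band[OF order_refl km(2) _ _ w])
       (use km(2) quad_form_min_increasing[of "X0\<^sup>2" "\<bar>c\<bar>" km \<omega>m] X0p stat km_nn in \<open>auto simp: X0_def\<close>)
qed

lemma Re_sqrt_rad_min_at_large_km:
  assumes km: "\<omega>m < \<bar>c\<bar> * km"
  shows "(- \<bar>c\<bar> * km, sign_c * km) \<in> Dinf \<omega>m km"
    and "(\<omega>, k) \<in> Dinf \<omega>m km \<Longrightarrow> Re (sqrt_rad (- \<bar>c\<bar> * km) (sign_c * km)) \<le> Re (sqrt_rad \<omega> k)"
proof -
  show D0: "(- \<bar>c\<bar> * km, sign_c * km) \<in> Dinf \<omega>m km"
    using km km_nn wm_pos by (auto simp: Dinf_def sign_c_def abs_mult)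
  assume w: "(\<omega>, k) \<in> Dinf \<omega>m km"
  show "Re (sqrt_rad (- \<bar>c\<bar> * km) (sign_c * km)) \<le> Re (sqrt_rad \<omega> k)"
  proof (rule Re_sqrt_rad_ge_witness[OF D0 refl _ w])
    fix K \<xi> :: real assume "K \<ge> km"
    then have "km\<^sup>2 \<le> K\<^sup>2" using km_nn by (intro power_mono) auto
    then show "K\<^sup>2 + \<xi>\<^sup>2 / (Re (sqrt_rad (- \<bar>c\<bar> * km) (sign_c * km)))\<^sup>2
        \<ge> (sign_c * km)\<^sup>2 + (- \<bar>c\<bar> * km + c * (sign_c * km))\<^sup>2 / (Re (sqrt_rad (- \<bar>c\<bar> * km) (sign_c * km)))\<^sup>2"
      by (simp add: c_mult_sign_c sign_c_mult_sq add_increasing2)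
  qed
qed

lemma Aconst_min_Re_sqrt_rad:
  "\<exists>\<omega>0 k0. (\<omega>0, k0) \<in> Dinf \<omega>m km \<and> 4 * Re (sqrt_rad \<omega>0 k0) = Aconst \<nu> c x0sq \<omega>m km \<and>
      (\<forall>\<omega> k. (\<omega>, k) \<in> Dinf \<omega>m km \<longrightarrow> 4 * Re (sqrt_rad \<omega> k) \<ge> Aconst \<nu> c x0sq \<omega>m km)"
proof -
  define kb where "kb = kbar \<nu> c x0sq \<omega>m"
  have phi_band: "phi \<nu> x0sq k0 (- \<omega>m + \<bar>c\<bar> * k0) = 4 * Re (sqrt_rad (-\<omega>m) (sign_c * k0))" for k0
    by (rule phi_eq_Re_sqrt_rad) (simp_all add: c_mult_sign_c sign_c_mult_sq)
  consider (interior) "km \<le> kb" | (edge) "kb < km" "\<bar>c\<bar> * km \<le> \<omega>m" | (large) "\<omega>m < \<bar>c\<bar> * km"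
    by linarith
  then show ?thesis
  proof cases
    case interior
    then have "Aconst \<nu> c x0sq \<omega>m km = 4 * Re (sqrt_rad (-\<omega>m) (sign_c * kb))"
      using phi_band by (simp add: Aconst_def kb_def)
    then show ?thesis using band_witness_in_Dinf Re_sqrt_rad_min_at_kbar interior
      by (intro exI[of _ "-\<omega>m"] exI[of _ "sign_c * kb"]) (auto simp: kb_def)
  next
    case edge
    then have "c = 0 \<or> km \<le> \<omega>m / \<bar>c\<bar>" by (cases "c = 0") (auto simp: pos_le_divide_eq mult.commute)
    then have "Aconst \<nu> c x0sq \<omega>m km = 4 * Re (sqrt_rad (-\<omega>m) (sign_c * km))"
      using edge phi_band by (simp add: Aconst_def kb_def)
    then show ?thesis using band_witness_in_Dinf Re_sqrt_rad_min_at_km edge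
      by (intro exI[of _ "-\<omega>m"] exI[of _ "sign_c * km"]) (auto simp: kb_def)
  next
    case large
    then have c0: "c \<noteq> 0" using wm_pos by auto
    then have "\<not> km \<le> \<omega>m / \<bar>c\<bar>" using large by (simp add: pos_le_divide_eq mult.commute)
    moreover have "\<not> km \<le> kb"
      using large abs_c_mult_kbar_le mult_left_mono[of km kb "\<bar>c\<bar>"] by (auto simp: kb_def)
    ultimately have "Aconst \<nu> c x0sq \<omega>m km = phi \<nu> x0sq km 0" using c0 by (simp add: Aconst_def kb_def)
    also have "\<dots> = 4 * Re (sqrt_rad (- \<bar>c\<bar> * km) (sign_c * km))"
      by (rule phi_eq_Re_sqrt_rad) (simp_all add: c_mult_sign_c sign_c_mult_sq)
    finally show ?thesis using Re_sqrt_rad_min_at_large_km[OF large]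
      by (rule_tac exI[of _ "- \<bar>c\<bar> * km"], rule_tac exI[of _ "sign_c * km"]) auto
  qed
qed

section \<open>The Robin sup\<close>

abbreviation sup_rho where "sup_rho L q \<equiv> robin_sup \<nu> c x0sq \<omega>m km L q"
abbreviation abs_rho where "abs_rho L q \<omega> k \<equiv> cmod (rho \<nu> c x0sq \<omega> k q 0 L)"

lemma abs_rho_le_sup_rho: "(\<omega>, k) \<in> Dinf \<omega>m km \<Longrightarrow> ereal (abs_rho L q \<omega> k) \<le> sup_rho L q"
  unfolding robin_sup_def by (rule SUP_upper2[of "(\<omega>,k)"]) auto

lemma sup_rho_le: "(\<And>\<omega> k. (\<omega>, k) \<in> Dinf \<omega>m km \<Longrightarrow> abs_rho L q \<omega> k \<le> M) \<Longrightarrow> sup_rho L q \<le> ereal M"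
  unfolding robin_sup_def by (rule SUP_least) auto

lemma Dinf_uminus: "(\<omega>, k) \<in> Dinf \<omega>m km \<Longrightarrow> (-\<omega>, -k) \<in> Dinf \<omega>m km"
  by (simp add: Dinf_def)

lemma sqrt_rad_uminus: "sqrt_rad (-\<omega>) (-k) = cnj (sqrt_rad \<omega> k)"
proof -
  have "radicand (-\<omega>) (-k) = cnj (radicand \<omega> k)" by (rule complex_eqI) (simp_all add: Re_radicand Im_radicand algebra_simps)
  moreover have "Im (radicand \<omega> k) \<noteq> 0 \<or> Re (radicand \<omega> k) \<ge> 0" using x0_nn by (simp add: Re_radicand)
  ultimately show ?thesis by (simp add: sqrt_rad_def csqrt_cnj)
qed

lemma abs_rho_cnj: "abs_rho L (cnj q) \<omega> k = abs_rho L q (-\<omega>) (-k)"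
proof -
  have r: "sqrt_rad \<omega> k = cnj (sqrt_rad (-\<omega>) (-k))" using sqrt_rad_uminus[of "-\<omega>" "-k"] by simp
  have "cmod (cnj q - sqrt_rad \<omega> k) = cmod (q - sqrt_rad (-\<omega>) (-k))" unfolding r
    by (metis complex_cnj_diff complex_mod_cnj)
  moreover have "cmod (cnj q + sqrt_rad \<omega> k) = cmod (q + sqrt_rad (-\<omega>) (-k))" unfolding r
    by (metis complex_cnj_add complex_mod_cnj)
  moreover have "Re (sqrt_rad \<omega> k) = Re (sqrt_rad (-\<omega>) (-k))" unfolding r by simp
  ultimately show ?thesis by (simp add: norm_rho_Robin)
qed

lemma sup_rho_cnj: "sup_rho L (cnj q) = sup_rho L q"
proof -
  have *: "sup_rho L (cnj q) \<le> sup_rho L q" for q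
    unfolding robin_sup_def
  proof (rule SUP_least)
    fix wk assume "wk \<in> Dinf \<omega>m km"
    then obtain \<omega> k where wk: "wk = (\<omega>, k)" "(\<omega>, k) \<in> Dinf \<omega>m km" by (cases wk) auto
    have "ereal (abs_rho L q (-\<omega>) (-k)) \<le> sup_rho L q" by (rule abs_rho_le_sup_rho[OF Dinf_uminus[OF wk(2)]])
    thus "ereal (cmod (rho \<nu> c x0sq (fst wk) (snd wk) (cnj q) 0 L)) \<le> (SUP wk\<in>Dinf \<omega>m km. ereal (cmod (rho \<nu> c x0sq (fst wk) (snd wk) q 0 L)))"
      using abs_rho_cnj wk(1) by (simp add: robin_sup_def)
  qed
  show ?thesis using *[of q] *[of "cnj q"] by simp
qed

lemma radicand_shift: "radicand (\<omega> + h) k = radicand \<omega> k + \<i> * complex_of_real (4 * \<nu> * h)"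
  by (rule complex_eqI) (simp_all add: Re_radicand Im_radicand algebra_simps)

lemma sqrt_rad_shift:
  fixes \<omega> h k :: real
  defines "r \<equiv> sqrt_rad \<omega> k" and "r' \<equiv> sqrt_rad (\<omega> + h) k"
  assumes h: "\<bar>h\<bar> \<le> 1"
  shows "cmod (r' - r) * cmod (r' + r) = 4 * \<nu> * \<bar>h\<bar>"
    and "Re r \<le> cmod (r' + r)"
    and "Re r' \<le> sqrt (cmod (radicand \<omega> k) + 4 * \<nu>)"
proof -
  have "r'\<^sup>2 - r\<^sup>2 = \<i> * complex_of_real (4 * \<nu> * h)"
    by (simp add: r'_def r_def sqrt_rad_def radicand_shift)
  then have "(r' - r) * (r' + r) = \<i> * complex_of_real (4 * \<nu> * h)"
    by (simp add: algebra_simps power2_eq_square)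
  then show "cmod (r' - r) * cmod (r' + r) = 4 * \<nu> * \<bar>h\<bar>"
    using nu_pos by (metis norm_mult norm_ii norm_of_real abs_mult abs_of_pos mult_1 abs_numeral
      mult_pos_pos zero_less_numeral)
  have "Re r' \<ge> 0" "Re r \<ge> 0" unfolding r'_def r_def sqrt_rad_def by (rule Re_csqrt)+
  then show "Re r \<le> cmod (r' + r)" using abs_Re_le_cmod[of "r' + r"] by simp
  have "Re r' \<le> cmod r'" by (rule complex_Re_le_cmod)
  also have "cmod r' = sqrt (cmod (radicand (\<omega> + h) k))" by (simp add: r'_def sqrt_rad_def)
  also have "cmod (radicand (\<omega> + h) k) \<le> cmod (radicand \<omega> k) + 4 * \<nu> * \<bar>h\<bar>"
    unfolding radicand_shift using norm_triangle_ineq[of "radicand \<omega> k" "\<i> * complex_of_real (4 * \<nu> * h)"] nu_pos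
    by (simp add: norm_mult abs_mult)
  also have "\<dots> \<le> cmod (radicand \<omega> k) + 4 * \<nu>" using h nu_pos by simp
  finally show "Re r' \<le> sqrt (cmod (radicand \<omega> k) + 4 * \<nu>)" by (simp add: real_sqrt_le_iff)
qed

text \<open>At \<open>q = - \<lambda>(\<omega>, k)\<close> the factor \<open>|q - \<lambda>'| / |q + \<lambda>'|\<close> at \<open>\<lambda>' = \<lambda>(\<omega> + h, k)\<close> equals
  \<open>|\<lambda>' + \<lambda>|\<^sup>2 / (4 \<nu> |h|) \<ge> X\<^sup>2 / (4 \<nu> |h|)\<close>, which is unbounded as \<open>h \<rightarrow> 0\<close>.\<close>

lemma sup_rho_at_pole:
  assumes L: "L > 0" and w: "(\<omega>, k) \<in> Dinf \<omega>m km" and q: "q + sqrt_rad \<omega> k = 0"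
  shows "sup_rho L q \<ge> ereal M"
proof -
  define r where "r = sqrt_rad \<omega> k"
  define X where "X = Re r"
  have Xp: "X > 0" using Re_sqrt_rad_pos[OF w] by (simp add: X_def r_def)
  define E where "E = exp (- (L / (2 * \<nu>)) * sqrt (cmod (radicand \<omega> k) + 4 * \<nu>))"
  define \<epsilon> where "\<epsilon> = min 1 (X\<^sup>2 * E / (4 * \<nu> * (\<bar>M\<bar> + 1)))"
  have Ep: "E > 0" by (simp add: E_def)
  have ep: "\<epsilon> > 0" "\<epsilon> \<le> 1" using Xp Ep nu_pos by (simp_all add: \<epsilon>_def)
  have epM: "\<bar>M\<bar> + 1 \<le> X\<^sup>2 / (4 * \<nu> * \<epsilon>) * E"
  proof -
    have "\<epsilon> \<le> X\<^sup>2 * E / (4 * \<nu> * (\<bar>M\<bar> + 1))" by (simp add: \<epsilon>_def)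
    then show ?thesis using nu_pos ep by (simp add: field_simps add_pos_nonneg)
  qed
  define h where "h = sgn \<omega> * \<epsilon>"
  have "\<omega> \<noteq> 0" using w wm_pos by (auto simp: Dinf_def)
  then have ah: "\<bar>h\<bar> = \<epsilon>" and w': "(\<omega> + h, k) \<in> Dinf \<omega>m km"
    using w ep by (auto simp: h_def sgn_if Dinf_def)
  define r' where "r' = sqrt_rad (\<omega> + h) k"
  note shift = sqrt_rad_shift[where \<omega> = \<omega> and h = h and k = k, folded r_def r'_def, unfolded ah, OF ep(2)]
  have a_ge: "X \<le> cmod (r' + r)" using shift(2) by (simp add: X_def)
  have bpos: "cmod (r' - r) > 0" using shift(1) nu_pos ep by (auto simp: zero_less_mult_iff)
  have expE: "E \<le> exp (- (L / (2 * \<nu>)) * Re r')"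
    unfolding E_def using shift(3) L nu_pos by (simp add: mult_left_mono divide_right_mono)
  have "abs_rho L q (\<omega> + h) k = cmod (r' + r) / cmod (r' - r) * exp (- (L / (2 * \<nu>)) * Re r')"
  proof -
    have "q - r' = - (r' + r)" "q + r' = r' - r" using q by (simp_all add: r_def r'_def eq_neg_iff_add_eq_0)
    then have "cmod (q - r') = cmod (r' + r)" "cmod (q + r') = cmod (r' - r)"
      by (simp_all only: norm_minus_cancel)
    then show ?thesis by (simp add: norm_rho_Robin r'_def)
  qed
  also have "cmod (r' + r) / cmod (r' - r) = (cmod (r' + r))\<^sup>2 / (4 * \<nu> * \<epsilon>)"
    using shift(1) bpos ep nu_pos by (simp add: field_simps power2_eq_square)
  also have "(cmod (r' + r))\<^sup>2 / (4 * \<nu> * \<epsilon>) * exp (- (L / (2 * \<nu>)) * Re r') \<ge> X\<^sup>2 / (4 * \<nu> * \<epsilon>) * E"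
    using a_ge Xp nu_pos ep expE Ep by (intro mult_mono divide_right_mono power_mono) auto
  finally have "M \<le> abs_rho L q (\<omega> + h) k" using epM by linarith
  then have "ereal M \<le> ereal (abs_rho L q (\<omega> + h) k)" by simp
  also have "\<dots> \<le> sup_rho L q" by (rule abs_rho_le_sup_rho[OF w'])
  finally show ?thesis .
qed

lemma abs_rho_real_sq:
  fixes \<omega> k p L :: real
  defines "X \<equiv> Re (sqrt_rad \<omega> k)" and "Y \<equiv> Im (sqrt_rad \<omega> k)"
  assumes dp: "(p + X)\<^sup>2 + Y\<^sup>2 > 0"
  shows "(abs_rho L (complex_of_real p) \<omega> k)\<^sup>2 = (1 - 4*p*X / ((p + X)\<^sup>2 + Y\<^sup>2)) * exp (- (L * X / \<nu>))"
proof -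
  have n1: "(cmod (complex_of_real p - sqrt_rad \<omega> k))\<^sup>2 = (p - X)\<^sup>2 + Y\<^sup>2"
    by (simp add: cmod_power2 X_def Y_def)
  have n2: "(cmod (complex_of_real p + sqrt_rad \<omega> k))\<^sup>2 = (p + X)\<^sup>2 + Y\<^sup>2"
    by (simp add: cmod_power2 X_def Y_def)
  have e: "(exp (- (L / (2 * \<nu>)) * X))\<^sup>2 = exp (- (L * X / \<nu>))"
    using nu_pos by (simp add: power2_eq_square exp_add[symmetric] field_simps)
  have "(abs_rho L (complex_of_real p) \<omega> k)\<^sup>2 = (cmod (complex_of_real p - sqrt_rad \<omega> k))\<^sup>2 / (cmod (complex_of_real p + sqrt_rad \<omega> k))\<^sup>2 * (exp (- (L / (2 * \<nu>)) * X))\<^sup>2"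
    by (simp add: norm_rho_Robin X_def power_mult_distrib power_divide)
  also have "\<dots> = ((p - X)\<^sup>2 + Y\<^sup>2) / ((p + X)\<^sup>2 + Y\<^sup>2) * exp (- (L * X / \<nu>))" by (simp only: n1 n2 e)
  also have "((p - X)\<^sup>2 + Y\<^sup>2) / ((p + X)\<^sup>2 + Y\<^sup>2) = 1 - 4*p*X / ((p + X)\<^sup>2 + Y\<^sup>2)"
    using dp by (simp add: field_simps power2_eq_square)
  finally show ?thesis .
qed

lemma abs_rho_real_sq_le:
  fixes \<omega> k p L :: real
  assumes w: "(\<omega>, k) \<in> Dinf \<omega>m km" and p: "p > 0"
  defines "X \<equiv> Re (sqrt_rad \<omega> k)"
  shows "(abs_rho L (complex_of_real p) \<omega> k)\<^sup>2 \<le> (1 - 4*p*X / ((p + X)\<^sup>2 + X\<^sup>2)) * exp (- (L * X / \<nu>))"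
proof -
  define Y where "Y = Im (sqrt_rad \<omega> k)"
  have Xp: "X > 0" using Re_sqrt_rad_pos[OF w] by (simp add: X_def)
  have YX: "Y\<^sup>2 \<le> X\<^sup>2" using Im_sq_le_Re_sq_sqrt_rad by (simp add: X_def Y_def)
  have dp: "(p + X)\<^sup>2 + Y\<^sup>2 > 0" using p Xp by (simp add: add_pos_nonneg)
  have "4*p*X / ((p + X)\<^sup>2 + X\<^sup>2) \<le> 4*p*X / ((p + X)\<^sup>2 + Y\<^sup>2)"
    using YX dp p Xp by (intro divide_left_mono) (auto intro!: mult_pos_pos)
  hence "1 - 4*p*X / ((p + X)\<^sup>2 + Y\<^sup>2) \<le> 1 - 4*p*X / ((p + X)\<^sup>2 + X\<^sup>2)" by simp
  thus ?thesis using abs_rho_real_sq[where \<omega>=\<omega> and k=k and p=p and L=L] dp unfolding X_def Y_def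
    by (simp add: mult_right_mono)
qed

lemma abs_rho_real_sq_ge:
  fixes \<omega> k p L :: real
  assumes w: "(\<omega>, k) \<in> Dinf \<omega>m km" and p: "p > 0"
  defines "X \<equiv> Re (sqrt_rad \<omega> k)"
  shows "(abs_rho L (complex_of_real p) \<omega> k)\<^sup>2 \<ge> (1 - 4*X/p) * exp (- (L * X / \<nu>))"
proof -
  define Y where "Y = Im (sqrt_rad \<omega> k)"
  have Xp: "X > 0" using Re_sqrt_rad_pos[OF w] by (simp add: X_def)
  have dp: "(p + X)\<^sup>2 + Y\<^sup>2 > 0" using p Xp by (simp add: add_pos_nonneg)
  have "p\<^sup>2 \<le> (p + X)\<^sup>2 + Y\<^sup>2" using p Xp by (simp add: power2_eq_square algebra_simps add_nonneg_nonneg)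
  hence "4*p*X / ((p + X)\<^sup>2 + Y\<^sup>2) \<le> 4*p*X / p\<^sup>2"
    using p Xp dp by (intro divide_left_mono) (auto intro!: mult_pos_pos)
  also have "4*p*X / p\<^sup>2 = 4*X/p" using p by (simp add: power2_eq_square)
  finally have "1 - 4*X/p \<le> 1 - 4*p*X / ((p + X)\<^sup>2 + Y\<^sup>2)" by simp
  thus ?thesis using abs_rho_real_sq[where \<omega>=\<omega> and k=k and p=p and L=L] dp unfolding X_def Y_def
    by (simp add: mult_right_mono)
qed

lemma abs_rho_real_le_1:
  assumes w: "(\<omega>, k) \<in> Dinf \<omega>m km" and p: "p \<ge> 0" and L: "L \<ge> 0"
  shows "abs_rho L (complex_of_real p) \<omega> k \<le> 1"
proof -
  have Xp: "Re (sqrt_rad \<omega> k) > 0" using Re_sqrt_rad_pos[OF w] by simp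
  have dp: "(p + Re (sqrt_rad \<omega> k))\<^sup>2 + (Im (sqrt_rad \<omega> k))\<^sup>2 > 0" using p Xp by (simp add: add_pos_nonneg)
  have t0: "4*p*Re (sqrt_rad \<omega> k) / ((p + Re (sqrt_rad \<omega> k))\<^sup>2 + (Im (sqrt_rad \<omega> k))\<^sup>2) \<ge> 0" using p Xp dp by simp
  have e1: "exp (- (L * Re (sqrt_rad \<omega> k) / \<nu>)) \<le> 1" using L Xp nu_pos by simp
  have "(1 - 4*p*Re (sqrt_rad \<omega> k) / ((p + Re (sqrt_rad \<omega> k))\<^sup>2 + (Im (sqrt_rad \<omega> k))\<^sup>2)) * exp (- (L * Re (sqrt_rad \<omega> k) / \<nu>)) \<le> 1 * exp (- (L * Re (sqrt_rad \<omega> k) / \<nu>))"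
    using t0 by (intro mult_right_mono) auto
  hence "(abs_rho L (complex_of_real p) \<omega> k)\<^sup>2 \<le> 1" using e1 abs_rho_real_sq[where \<omega>=\<omega> and k=k and p=p and L=L, OF dp] by linarith
  hence "(abs_rho L (complex_of_real p) \<omega> k)\<^sup>2 \<le> 1\<^sup>2" by (simp only: power_one)
  thus ?thesis by (rule power2_le_imp_le) simp
qed

lemma exists_Re_sqrt_rad_eq:
  assumes X1: "X1 > 0" "X1\<^sup>2 \<ge> 2 * (x0sq + 4 * \<nu>\<^sup>2 * km\<^sup>2)" "X1\<^sup>2 \<ge> 4 * \<nu> * (\<omega>m + \<bar>c\<bar> * km)"
  shows "\<exists>\<omega>. (\<omega>, km) \<in> Dinf \<omega>m km \<and> Re (sqrt_rad \<omega> km) = X1 \<and> (Im (sqrt_rad \<omega> km))\<^sup>2 = X1\<^sup>2 - (x0sq + 4 * \<nu>\<^sup>2 * km\<^sup>2)"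
proof -
  define a1 where "a1 = x0sq + 4 * \<nu>\<^sup>2 * km\<^sup>2"
  have a1: "a1 \<ge> 0" using x0_nn by (simp add: a1_def)
  define Y1 where "Y1 = sqrt (X1\<^sup>2 - a1)"
  have "2 * a1 \<le> X1\<^sup>2" using X1(2) by (simp add: a1_def)
  hence XA: "X1\<^sup>2 - a1 \<ge> 0" using a1 by linarith
  hence Y1sq: "Y1\<^sup>2 = X1\<^sup>2 - a1" unfolding Y1_def by (rule real_sqrt_pow2)
  have Y10: "Y1 \<ge> 0" using XA by (simp add: Y1_def)
  define \<omega> where "\<omega> = X1 * Y1 / (2 * \<nu>) - c * km"
  have sv_eq: "radicand \<omega> km = (Complex X1 Y1)\<^sup>2"
    by (rule complex_eqI) (use Y1sq nu_pos in \<open>simp_all add: Re_radicand Im_radicand \<omega>_def a1_def power2_eq_square field_simps\<close>)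
  have r_eq: "sqrt_rad \<omega> km = Complex X1 Y1" unfolding sqrt_rad_def sv_eq using X1 by (intro csqrt_square) simp
  define m where "m = 2 * \<nu> * (\<omega>m + \<bar>c\<bar> * km)"
  have m0: "m \<ge> 0" using nu_pos wm_pos km_nn by (simp add: m_def)
  have "(X1 * Y1)\<^sup>2 = X1\<^sup>2 * (X1\<^sup>2 - a1)" by (simp add: power_mult_distrib Y1sq)
  also have "\<dots> \<ge> X1\<^sup>2 * (X1\<^sup>2 / 2)" using X1(2) by (intro mult_left_mono) (auto simp: a1_def)
  also have "X1\<^sup>2 * (X1\<^sup>2 / 2) \<ge> (2*m) * (2*m) / 2"
  proof -
    have h2m: "2*m \<le> X1\<^sup>2" using X1(3) by (simp add: m_def)
    have "(2*m) * (2*m) \<le> X1\<^sup>2 * X1\<^sup>2" using h2m m0 by (intro mult_mono) auto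
    thus ?thesis by simp
  qed
  finally have h: "(X1 * Y1)\<^sup>2 \<ge> 2*m * (2*m) / 2" .
  have "(X1 * Y1)\<^sup>2 \<ge> m\<^sup>2" using h mult_nonneg_nonneg[OF m0 m0] unfolding power2_eq_square by linarith
  hence XYm: "X1 * Y1 \<ge> m" by (rule power2_le_imp_le) (use X1 Y10 in simp)
  have "\<omega> \<ge> \<omega>m"
  proof -
    have "X1 * Y1 / (2 * \<nu>) \<ge> \<omega>m + \<bar>c\<bar> * km" using XYm nu_pos by (simp add: m_def field_simps)
    moreover have "c * km \<le> \<bar>c\<bar> * km" using km_nn by (simp add: mult_right_mono)
    ultimately show ?thesis by (simp add: \<omega>_def)
  qed
  hence "(\<omega>, km) \<in> Dinf \<omega>m km" using km_nn by (simp add: Dinf_def)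
  thus ?thesis using r_eq Y1sq by (intro exI[of _ \<omega>]) (simp add: a1_def)
qed

section \<open>Existence and uniqueness of the optimal Robin parameter\<close>

lemma abs_rho_le_imp_sq:
  assumes w: "(\<omega>, k) \<in> Dinf \<omega>m km" and q: "Re q > 0" and bound: "sup_rho L q \<le> ereal \<delta>"
  shows "exp (- (L * Re (sqrt_rad \<omega> k) / \<nu>)) * (cmod (q - sqrt_rad \<omega> k))\<^sup>2 \<le> \<delta>\<^sup>2 * (cmod (q + sqrt_rad \<omega> k))\<^sup>2"
proof -
  define r where "r = sqrt_rad \<omega> k"
  define X where "X = Re r"
  have Xp: "X > 0" using Re_sqrt_rad_pos[OF w] by (simp add: X_def r_def)
  have "Re (q + r) > 0" using q Xp by (simp add: X_def)
  then have pos: "cmod (q + r) > 0" using abs_Re_le_cmod[of "q + r"] by linarith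
  have "ereal (abs_rho L q \<omega> k) \<le> ereal \<delta>" using abs_rho_le_sup_rho[OF w, where L=L and q=q] bound by (rule order_trans)
  then have "cmod (q - r) / cmod (q + r) * exp (- (L / (2 * \<nu>)) * X) \<le> \<delta>"
    by (simp add: norm_rho_Robin r_def X_def)
  then have "cmod (q - r) * exp (- (L / (2 * \<nu>)) * X) \<le> \<delta> * cmod (q + r)"
    using pos by (simp add: field_simps)
  then have "(cmod (q - r) * exp (- (L / (2 * \<nu>)) * X))\<^sup>2 \<le> (\<delta> * cmod (q + r))\<^sup>2"
    by (intro power_mono) auto
  moreover have "(exp (- (L / (2 * \<nu>)) * X))\<^sup>2 = exp (- (L * X / \<nu>))"
    using nu_pos by (simp add: power2_eq_square exp_add[symmetric] field_simps)
  ultimately show ?thesis by (simp add: power_mult_distrib X_def r_def mult.commute)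
qed

lemma abs_rho_sq_mult:
  assumes "cmod (q + sqrt_rad \<omega> k) > 0"
  shows "(abs_rho L q \<omega> k)\<^sup>2 * (cmod (q + sqrt_rad \<omega> k))\<^sup>2 = exp (- (L * Re (sqrt_rad \<omega> k) / \<nu>)) * (cmod (q - sqrt_rad \<omega> k))\<^sup>2"
proof -
  have e: "(exp (- (L / (2 * \<nu>)) * Re (sqrt_rad \<omega> k)))\<^sup>2 = exp (- (L * Re (sqrt_rad \<omega> k) / \<nu>))"
    using nu_pos by (simp add: power2_eq_square exp_add[symmetric] field_simps)
  have "(abs_rho L q \<omega> k)\<^sup>2 = (cmod (q - sqrt_rad \<omega> k))\<^sup>2 / (cmod (q + sqrt_rad \<omega> k))\<^sup>2 * (exp (- (L / (2 * \<nu>)) * Re (sqrt_rad \<omega> k)))\<^sup>2"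
    by (simp add: norm_rho_Robin power_mult_distrib power_divide)
  then show ?thesis using assms unfolding e by (simp add: field_simps)
qed

text \<open>Averaging the two bounds \<open>e |q\<^sub>i - \<lambda>|\<^sup>2 \<le> \<delta>\<^sup>2 |q\<^sub>i + \<lambda>|\<^sup>2\<close> with the parallelogram law
  gains the term \<open>(e - \<delta>\<^sup>2) |q\<^sub>1 - q\<^sub>2|\<^sup>2 / 4\<close> at the midpoint, \<open>e = exp (- L X / \<nu>)\<close>.\<close>

lemma abs_rho_midpoint_parallelogram:
  assumes w: "(\<omega>, k) \<in> Dinf \<omega>m km" and q1: "Re q1 > 0" and q2: "Re q2 > 0"
    and F1: "sup_rho L q1 \<le> ereal \<delta>" and F2: "sup_rho L q2 \<le> ereal \<delta>" and mid: "(q1 + q2) / 2 = q"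
  defines "r \<equiv> sqrt_rad \<omega> k" and "e \<equiv> exp (- (L * Re (sqrt_rad \<omega> k) / \<nu>))"
  shows "(abs_rho L q \<omega> k)\<^sup>2 * (cmod (q + r))\<^sup>2
      \<le> \<delta>\<^sup>2 * (cmod (q + r))\<^sup>2 - (e - \<delta>\<^sup>2) * (cmod (q1 - q2))\<^sup>2 / 4"
proof -
  define d2 where "d2 = (cmod (q1 - q2))\<^sup>2"
  have pm: "(cmod (q - r))\<^sup>2 = ((cmod (q1 - r))\<^sup>2 + (cmod (q2 - r))\<^sup>2) / 2 - d2 / 4"
    using cmod_midpoint_minus_sq[of q1 q2 r] mid by (simp add: d2_def)
  have "e * (cmod (q - r))\<^sup>2 = (e * (cmod (q1 - r))\<^sup>2 + e * (cmod (q2 - r))\<^sup>2) / 2 - e * d2 / 4"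
    unfolding pm by (simp add: algebra_simps)
  also have "\<dots> \<le> (\<delta>\<^sup>2 * (cmod (q1 + r))\<^sup>2 + \<delta>\<^sup>2 * (cmod (q2 + r))\<^sup>2) / 2 - e * d2 / 4"
    using abs_rho_le_imp_sq[OF w q1 F1] abs_rho_le_imp_sq[OF w q2 F2] by (simp add: e_def r_def)
  also have "\<dots> = \<delta>\<^sup>2 * (cmod (q + r))\<^sup>2 - (e - \<delta>\<^sup>2) * d2 / 4"
    unfolding cmod_midpoint_plus_sq[of q1 q2 r, unfolded mid, folded d2_def] by (simp add: field_simps)
  finally have key: "e * (cmod (q - r))\<^sup>2 \<le> \<delta>\<^sup>2 * (cmod (q + r))\<^sup>2 - (e - \<delta>\<^sup>2) * d2 / 4" .
  have "Re q = (Re q1 + Re q2) / 2" unfolding mid[symmetric] by simp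
  then have "Re (q + r) > 0" using q1 q2 Re_sqrt_rad_pos[OF w] by (simp add: r_def)
  then have "cmod (q + r) > 0" using abs_Re_le_cmod[of "q + r"] by linarith
  then show ?thesis using abs_rho_sq_mult[of q \<omega> k L] key by (simp add: e_def r_def d2_def)
qed

text \<open>An upper bound for \<open>|\<rho>|\<^sup>2\<close> at the real midpoint \<open>m\<close> of two parameters with sup \<open>\<le> \<delta>\<close>
  and distance \<open>\<surd>d2\<close>, as a function of \<open>x = Re \<lambda>(\<omega>, k)\<close>.\<close>

definition midpoint_bound :: "real \<Rightarrow> real \<Rightarrow> real \<Rightarrow> real \<Rightarrow> real \<Rightarrow> real" where
  "midpoint_bound L \<delta> d2 m x =
     min (\<delta>\<^sup>2 - max (exp (- (L * x / \<nu>)) - \<delta>\<^sup>2) 0 * d2 / (4 * ((m + x)\<^sup>2 + x\<^sup>2)))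
         (exp (- (L * x / \<nu>)) * (1 - 4 * m * x / ((m + x)\<^sup>2 + x\<^sup>2)))"

lemma abs_rho_midpoint_sq_le:
  assumes w: "(\<omega>, k) \<in> Dinf \<omega>m km" and q1: "Re q1 > 0" and q2: "Re q2 > 0"
    and F1: "sup_rho L q1 \<le> ereal \<delta>" and F2: "sup_rho L q2 \<le> ereal \<delta>"
    and mid: "(q1 + q2) / 2 = complex_of_real m" and m: "m > 0"
  shows "(abs_rho L (complex_of_real m) \<omega> k)\<^sup>2 \<le> midpoint_bound L \<delta> ((cmod (q1 - q2))\<^sup>2) m (Re (sqrt_rad \<omega> k))"
proof -
  define r where "r = sqrt_rad \<omega> k"
  define X where "X = Re r"
  define e where "e = exp (- (L * X / \<nu>))"
  define D2 where "D2 = (m + X)\<^sup>2 + X\<^sup>2"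
  define d2 where "d2 = (cmod (q1 - q2))\<^sup>2"
  define P where "P = (cmod (complex_of_real m + r))\<^sup>2"
  have Xp: "X > 0" using Re_sqrt_rad_pos[OF w] by (simp add: X_def r_def)
  have D2p: "D2 > 0" using Xp m by (simp add: D2_def add_pos_nonneg)
  have B2: "(abs_rho L (complex_of_real m) \<omega> k)\<^sup>2 \<le> e * (1 - 4 * m * X / D2)"
    using abs_rho_real_sq_le[OF w m, where L=L] by (simp add: e_def D2_def X_def r_def mult.commute)
  also have "\<dots> \<le> e" using m Xp D2p by (simp add: e_def mult_left_le)
  finally have B2e: "(abs_rho L (complex_of_real m) \<omega> k)\<^sup>2 \<le> e" .
  have P_eq: "P = (m + X)\<^sup>2 + (Im r)\<^sup>2" by (simp add: P_def cmod_power2 X_def)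
  then have Pp: "P > 0" using Xp m by (simp add: add_pos_nonneg)
  have PD: "P \<le> D2" using P_eq Im_sq_le_Re_sq_sqrt_rad[of \<omega> k] by (simp add: D2_def X_def r_def)
  have B1: "(abs_rho L (complex_of_real m) \<omega> k)\<^sup>2 \<le> \<delta>\<^sup>2 - max (e - \<delta>\<^sup>2) 0 * d2 / (4 * D2)"
  proof (cases "e \<le> \<delta>\<^sup>2")
    case True then show ?thesis using B2e by simp
  next
    case False
    have "(abs_rho L (complex_of_real m) \<omega> k)\<^sup>2 * P \<le> \<delta>\<^sup>2 * P - (e - \<delta>\<^sup>2) * d2 / 4"
      using abs_rho_midpoint_parallelogram[OF w q1 q2 F1 F2 mid] by (simp add: P_def e_def X_def r_def d2_def)
    then have "(abs_rho L (complex_of_real m) \<omega> k)\<^sup>2 \<le> \<delta>\<^sup>2 - (e - \<delta>\<^sup>2) * d2 / (4 * P)"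
      using Pp by (simp add: field_simps)
    moreover have "(e - \<delta>\<^sup>2) * d2 / (4 * D2) \<le> (e - \<delta>\<^sup>2) * d2 / (4 * P)"
      using False Pp PD by (intro divide_left_mono mult_nonneg_nonneg) (auto simp: d2_def)
    ultimately show ?thesis using False by simp
  qed
  show ?thesis using B1 B2 by (simp add: midpoint_bound_def e_def D2_def d2_def X_def r_def)
qed

lemma midpoint_bound_less:
  assumes "x > 0" "m > 0" "d2 > 0"
  shows "midpoint_bound L \<delta> d2 m x < \<delta>\<^sup>2"
proof -
  have Dp: "(m + x)\<^sup>2 + x\<^sup>2 > 0" using assms by (simp add: add_pos_nonneg)
  show ?thesis
  proof (cases "exp (- (L * x / \<nu>)) > \<delta>\<^sup>2")
    case True
    then have "max (exp (- (L * x / \<nu>)) - \<delta>\<^sup>2) 0 * d2 / (4 * ((m + x)\<^sup>2 + x\<^sup>2)) > 0"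
      using assms Dp by simp
    then show ?thesis by (simp add: midpoint_bound_def)
  next
    case False
    have "4 * m * x / ((m + x)\<^sup>2 + x\<^sup>2) > 0" using assms Dp by simp
    then have "exp (- (L * x / \<nu>)) * (1 - 4 * m * x / ((m + x)\<^sup>2 + x\<^sup>2)) < exp (- (L * x / \<nu>))" by simp
    moreover have "midpoint_bound L \<delta> d2 m x \<le> exp (- (L * x / \<nu>)) * (1 - 4 * m * x / ((m + x)\<^sup>2 + x\<^sup>2))"
      by (simp add: midpoint_bound_def)
    ultimately show ?thesis using False by linarith
  qed
qed

lemma midpoint_bound_tail:
  assumes x: "x > 0" "\<nu> * ln (2 / \<delta>\<^sup>2) / L \<le> x" and L: "L > 0" and m: "m > 0" and \<delta>: "\<delta> > 0"
  shows "midpoint_bound L \<delta> d2 m x \<le> \<delta>\<^sup>2 / 2"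
proof -
  have "ln (2 / \<delta>\<^sup>2) \<le> L * x / \<nu>" using x L nu_pos by (simp add: field_simps)
  then have "exp (- (L * x / \<nu>)) \<le> exp (- ln (2 / \<delta>\<^sup>2))" by simp
  also have "\<dots> = \<delta>\<^sup>2 / 2" using \<delta> by (simp add: exp_minus exp_ln)
  finally have e: "exp (- (L * x / \<nu>)) \<le> \<delta>\<^sup>2 / 2" .
  have "4 * m * x / ((m + x)\<^sup>2 + x\<^sup>2) \<ge> 0" using m x by simp
  then have "exp (- (L * x / \<nu>)) * (1 - 4 * m * x / ((m + x)\<^sup>2 + x\<^sup>2)) \<le> exp (- (L * x / \<nu>))"
    by (simp add: mult_left_le)
  moreover have "midpoint_bound L \<delta> d2 m x \<le> exp (- (L * x / \<nu>)) * (1 - 4 * m * x / ((m + x)\<^sup>2 + x\<^sup>2))"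
    by (simp add: midpoint_bound_def)
  ultimately show ?thesis using e by linarith
qed

lemma continuous_on_midpoint_bound:
  assumes "X0 > 0"
  shows "continuous_on {X0..xb} (midpoint_bound L \<delta> d2 m)"
proof -
  have "(m + x)\<^sup>2 + x\<^sup>2 > 0" if "x \<in> {X0..xb}" for x
    using that assms by (intro add_nonneg_pos) auto
  then have "\<forall>x\<in>{X0..xb}. (m + x)\<^sup>2 + x\<^sup>2 \<noteq> 0" "\<forall>x\<in>{X0..xb}. 4 * ((m + x)\<^sup>2 + x\<^sup>2) \<noteq> 0"
    by force+
  then show ?thesis
    unfolding midpoint_bound_def using nu_pos by (intro continuous_intros) auto
qed

lemma sup_rho_midpoint_less:
  assumes L: "L > 0" and ne: "q1 \<noteq> q2" and q1: "Re q1 > 0" and q2: "Re q2 > 0"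
    and F1: "sup_rho L q1 \<le> ereal \<delta>" and F2: "sup_rho L q2 \<le> ereal \<delta>" and mid: "(q1 + q2) / 2 = complex_of_real m"
    and m: "m > 0" and \<delta>: "\<delta> > 0"
  shows "sup_rho L (complex_of_real m) < ereal \<delta>"
proof -
  obtain \<omega>0 k0 where A: "(\<omega>0, k0) \<in> Dinf \<omega>m km" "4 * Re (sqrt_rad \<omega>0 k0) = Aconst \<nu> c x0sq \<omega>m km"
      "\<And>\<omega> k. (\<omega>, k) \<in> Dinf \<omega>m km \<Longrightarrow> 4 * Re (sqrt_rad \<omega> k) \<ge> Aconst \<nu> c x0sq \<omega>m km"
    using Aconst_min_Re_sqrt_rad by blast
  define X0 where "X0 = Re (sqrt_rad \<omega>0 k0)"
  define H where "H = midpoint_bound L \<delta> ((cmod (q1 - q2))\<^sup>2) m"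
  define xb where "xb = max X0 (\<nu> * ln (2 / \<delta>\<^sup>2) / L)"
  have X0p: "X0 > 0" using Re_sqrt_rad_pos[OF A(1)] by (simp add: X0_def)
  obtain M where M: "M < \<delta>\<^sup>2" "M \<ge> 0" "\<And>x. x \<ge> X0 \<Longrightarrow> H x \<le> M"
    using uniform_gap_of_continuous[of X0 xb H "\<delta>\<^sup>2"] continuous_on_midpoint_bound[OF X0p]
      midpoint_bound_less[OF _ m] midpoint_bound_tail[OF _ _ L m \<delta>] X0p ne \<delta>
    by (fastforce simp: H_def xb_def)
  have "sup_rho L (complex_of_real m) \<le> ereal (sqrt M)"
  proof (rule sup_rho_le)
    fix \<omega> k assume w: "(\<omega>, k) \<in> Dinf \<omega>m km"
    have "(abs_rho L (complex_of_real m) \<omega> k)\<^sup>2 \<le> H (Re (sqrt_rad \<omega> k))"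
      using abs_rho_midpoint_sq_le[OF w q1 q2 F1 F2 mid m] by (simp add: H_def)
    also have "\<dots> \<le> M" using M(3) A(2) A(3)[OF w] by (simp add: X0_def)
    finally show "abs_rho L (complex_of_real m) \<omega> k \<le> sqrt M" by (rule real_le_rsqrt)
  qed
  also have "sqrt M < \<delta>" using M(1) \<delta> real_sqrt_less_mono[of M "\<delta>\<^sup>2"] by simp
  finally show ?thesis by simp
qed

lemma Dinf_nonempty: "\<exists>\<omega> k. (\<omega>, k) \<in> Dinf \<omega>m km"
  using Aconst_min_Re_sqrt_rad by blast

lemma sup_rho_real_bounds:
  assumes L: "L \<ge> 0" and p: "p \<ge> 0"
  shows "sup_rho L (complex_of_real p) \<le> 1" "sup_rho L (complex_of_real p) \<ge> 0"
proof -
  have "sup_rho L (complex_of_real p) \<le> ereal 1"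
    by (rule sup_rho_le) (rule abs_rho_real_le_1[OF _ p L])
  thus "sup_rho L (complex_of_real p) \<le> 1" by (simp add: one_ereal_def)
  obtain \<omega> k where w: "(\<omega>, k) \<in> Dinf \<omega>m km" using Dinf_nonempty by blast
  have "ereal 0 \<le> ereal (abs_rho L (complex_of_real p) \<omega> k)" by simp
  also have "\<dots> \<le> sup_rho L (complex_of_real p)" by (rule abs_rho_le_sup_rho[OF w])
  finally show "sup_rho L (complex_of_real p) \<ge> 0" by (simp add: zero_ereal_def)
qed

definition sup_rho_real where "sup_rho_real L p = real_of_ereal (sup_rho L (complex_of_real p))"

lemma sup_rho_real_eq: "L \<ge> 0 \<Longrightarrow> p \<ge> 0 \<Longrightarrow> sup_rho L (complex_of_real p) = ereal (sup_rho_real L p)"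
  using sup_rho_real_bounds[of L p] unfolding sup_rho_real_def
  by (cases "sup_rho L (complex_of_real p)") auto

lemma sup_rho_real_range: "L \<ge> 0 \<Longrightarrow> p \<ge> 0 \<Longrightarrow> 0 \<le> sup_rho_real L p \<and> sup_rho_real L p \<le> 1"
  using sup_rho_real_bounds[of L p] sup_rho_real_eq[of L p] by simp

lemma abs_rho_le_sup_rho_real: "L \<ge> 0 \<Longrightarrow> p \<ge> 0 \<Longrightarrow> (\<omega>, k) \<in> Dinf \<omega>m km \<Longrightarrow> abs_rho L (complex_of_real p) \<omega> k \<le> sup_rho_real L p"
  using abs_rho_le_sup_rho[where \<omega>=\<omega> and k=k and L=L and q="complex_of_real p"] sup_rho_real_eq[of L p] by simp

lemma abs_rho_real_lipschitz:
  assumes L: "L \<ge> 0" and w: "(\<omega>, k) \<in> Dinf \<omega>m km" and p: "p \<ge> \<eta>" and q: "q \<ge> \<eta>" and eta: "\<eta> > 0"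
  shows "abs_rho L (complex_of_real p) \<omega> k \<le> abs_rho L (complex_of_real q) \<omega> k + sqrt (4 * \<bar>p - q\<bar> / \<eta>)"
proof -
  define X where "X = Re (sqrt_rad \<omega> k)"
  define Y where "Y = Im (sqrt_rad \<omega> k)"
  define e where "e = exp (- (L * X / \<nu>))"
  have Xp: "X > 0" using Re_sqrt_rad_pos[OF w] by (simp add: X_def)
  have e1: "e \<le> 1" using L Xp nu_pos by (simp add: e_def)
  have e0: "e > 0" by (simp add: e_def)
  have dp: "(p + X)\<^sup>2 + Y\<^sup>2 > 0" using p eta Xp by (simp add: add_pos_nonneg)
  have dq: "(q + X)\<^sup>2 + Y\<^sup>2 > 0" using q eta Xp by (simp add: add_pos_nonneg)
  have np: "(abs_rho L (complex_of_real p) \<omega> k)\<^sup>2 = (1 - 4*p*X / ((p + X)\<^sup>2 + Y\<^sup>2)) * e"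
    using abs_rho_real_sq[where \<omega>=\<omega> and k=k and p=p and L=L] dp by (simp add: X_def Y_def e_def)
  have nq: "(abs_rho L (complex_of_real q) \<omega> k)\<^sup>2 = (1 - 4*q*X / ((q + X)\<^sup>2 + Y\<^sup>2)) * e"
    using abs_rho_real_sq[where \<omega>=\<omega> and k=k and p=q and L=L] dq by (simp add: X_def Y_def e_def)
  define cc where "cc = 4 * \<bar>p - q\<bar> / \<eta>"
  have cc0: "cc \<ge> 0" using eta by (simp add: cc_def)
  have gl: "\<bar>4*p*X / ((p + X)\<^sup>2 + Y\<^sup>2) - 4*q*X / ((q + X)\<^sup>2 + Y\<^sup>2)\<bar> \<le> cc"
    unfolding cc_def by (rule gain_lipschitz[OF Xp p q eta])
  have "(abs_rho L (complex_of_real p) \<omega> k)\<^sup>2 - (abs_rho L (complex_of_real q) \<omega> k)\<^sup>2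
      = e * (4*q*X / ((q + X)\<^sup>2 + Y\<^sup>2) - 4*p*X / ((p + X)\<^sup>2 + Y\<^sup>2))"
    unfolding np nq by (simp add: algebra_simps)
  also have "\<dots> \<le> e * cc" using gl e0 by (intro mult_left_mono) auto
  also have "\<dots> \<le> cc" using e1 cc0 e0 by (intro mult_left_le_one_le) auto
  finally have "(abs_rho L (complex_of_real p) \<omega> k)\<^sup>2 \<le> (abs_rho L (complex_of_real q) \<omega> k)\<^sup>2 + cc" by simp
  also have "\<dots> \<le> (abs_rho L (complex_of_real q) \<omega> k + sqrt cc)\<^sup>2"
    using cc0 by (simp add: power2_sum)
  finally have sq: "(abs_rho L (complex_of_real p) \<omega> k)\<^sup>2 \<le> (abs_rho L (complex_of_real q) \<omega> k + sqrt cc)\<^sup>2" .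
  have "0 \<le> abs_rho L (complex_of_real q) \<omega> k + sqrt cc" using cc0 by simp
  from power2_le_imp_le[OF sq this] show ?thesis by (simp add: cc_def)
qed

lemma sup_rho_real_lipschitz:
  assumes L: "L \<ge> 0" and p: "p \<ge> \<eta>" and q: "q \<ge> \<eta>" and eta: "\<eta> > 0"
  shows "\<bar>sup_rho_real L p - sup_rho_real L q\<bar> \<le> sqrt (4 * \<bar>p - q\<bar> / \<eta>)"
proof -
  have one: "sup_rho_real L a \<le> sup_rho_real L b + sqrt (4 * \<bar>a - b\<bar> / \<eta>)" if a: "a \<ge> \<eta>" and b: "b \<ge> \<eta>" for a b
  proof -
    have "sup_rho L (complex_of_real a) \<le> ereal (sup_rho_real L b + sqrt (4 * \<bar>a - b\<bar> / \<eta>))"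
    proof (rule sup_rho_le)
      fix \<omega> k assume w: "(\<omega>, k) \<in> Dinf \<omega>m km"
      have "abs_rho L (complex_of_real a) \<omega> k \<le> abs_rho L (complex_of_real b) \<omega> k + sqrt (4 * \<bar>a - b\<bar> / \<eta>)"
        by (rule abs_rho_real_lipschitz[OF L w a b eta])
      also have "abs_rho L (complex_of_real b) \<omega> k \<le> sup_rho_real L b" using abs_rho_le_sup_rho_real[OF L _ w] b eta by simp
      finally show "abs_rho L (complex_of_real a) \<omega> k \<le> sup_rho_real L b + sqrt (4 * \<bar>a - b\<bar> / \<eta>)" by simp
    qed
    thus ?thesis using sup_rho_real_eq[OF L, of a] a eta by simp
  qed
  show ?thesis using one[OF p q] one[OF q p] by (simp add: abs_le_iff abs_minus_commute)
qed

lemma continuous_on_sup_rho_real: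
  assumes L: "L \<ge> 0" and eta: "\<eta> > 0"
  shows "continuous_on {\<eta>..B} (sup_rho_real L)"
  unfolding continuous_on_iff
proof (intro ballI allI impI)
  fix x e :: real assume x: "x \<in> {\<eta>..B}" and e: "e > 0"
  define d where "d = e\<^sup>2 * \<eta> / 8"
  have d: "d > 0" using e eta by (simp add: d_def)
  show "\<exists>d>0. \<forall>x'\<in>{\<eta>..B}. dist x' x < d \<longrightarrow> dist (sup_rho_real L x') (sup_rho_real L x) < e"
  proof (intro exI[of _ d] conjI ballI impI d)
    fix x' assume x': "x' \<in> {\<eta>..B}" and dx: "dist x' x < d"
    have "dist (sup_rho_real L x') (sup_rho_real L x) \<le> sqrt (4 * \<bar>x' - x\<bar> / \<eta>)"
      using sup_rho_real_lipschitz[OF L _ _ eta, of x' x] x x' by (simp add: dist_real_def)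
    also have "4 * \<bar>x' - x\<bar> / \<eta> < e\<^sup>2"
    proof -
      have "\<bar>x' - x\<bar> < e\<^sup>2 * \<eta> / 8" using dx by (simp add: dist_real_def d_def)
      hence "4 * \<bar>x' - x\<bar> < e\<^sup>2 * \<eta> / 2" by simp
      hence "4 * \<bar>x' - x\<bar> / \<eta> < e\<^sup>2 / 2" using eta by (simp add: field_simps)
      moreover have "e\<^sup>2 / 2 \<le> e\<^sup>2" by simp
      ultimately show ?thesis by linarith
    qed
    hence "sqrt (4 * \<bar>x' - x\<bar> / \<eta>) < sqrt (e\<^sup>2)" by (rule real_sqrt_less_mono)
    hence "sqrt (4 * \<bar>x' - x\<bar> / \<eta>) < e" using e by simp
    finally show "dist (sup_rho_real L x') (sup_rho_real L x) < e" .
  qed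
qed

lemma sup_rho_le_imp_nonpole:
  assumes L: "L > 0" and bound: "sup_rho L q \<le> ereal \<delta>0" and w: "(\<omega>, k) \<in> Dinf \<omega>m km"
  shows "q + sqrt_rad \<omega> k \<noteq> 0"
proof
  assume "q + sqrt_rad \<omega> k = 0"
  from sup_rho_at_pole[OF L w this, of "\<delta>0 + 1"] bound have "ereal (\<delta>0 + 1) \<le> ereal \<delta>0" by (rule order_trans)
  thus False by simp
qed

lemma sup_rho_le_imp_sq:
  assumes L: "L > 0" and bound: "sup_rho L q \<le> ereal \<delta>0" and w: "(\<omega>, k) \<in> Dinf \<omega>m km"
  shows "(cmod (q - sqrt_rad \<omega> k))\<^sup>2 \<le> (\<delta>0 * exp (L * Re (sqrt_rad \<omega> k) / (2 * \<nu>)))\<^sup>2 * (cmod (q + sqrt_rad \<omega> k))\<^sup>2"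
proof -
  define r where "r = sqrt_rad \<omega> k"
  define E where "E = exp (- (L / (2 * \<nu>)) * Re r)"
  have pos: "cmod (q + r) > 0" using sup_rho_le_imp_nonpole[OF L bound w] by (simp add: r_def)
  have "ereal (abs_rho L q \<omega> k) \<le> ereal \<delta>0" using abs_rho_le_sup_rho[OF w, where L=L and q=q] bound by (rule order_trans)
  hence n: "cmod (q - r) / cmod (q + r) * E \<le> \<delta>0" by (simp add: norm_rho_Robin r_def E_def)
  have EE: "E * exp (L * Re r / (2 * \<nu>)) = 1" by (simp add: E_def exp_add[symmetric])
  have nn: "cmod (q - r) * E \<le> \<delta>0 * cmod (q + r)" using n pos by (simp add: field_simps)
  have le: "cmod (q - r) \<le> (\<delta>0 * exp (L * Re r / (2 * \<nu>))) * cmod (q + r)"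
  proof -
    have "cmod (q - r) = cmod (q - r) * (E * exp (L * Re r / (2 * \<nu>)))" using EE by simp
    also have "\<dots> = (cmod (q - r) * E) * exp (L * Re r / (2 * \<nu>))" by (simp only: mult.assoc)
    also have "\<dots> \<le> (\<delta>0 * cmod (q + r)) * exp (L * Re r / (2 * \<nu>))" by (rule mult_right_mono[OF nn]) simp
    also have "\<dots> = (\<delta>0 * exp (L * Re r / (2 * \<nu>))) * cmod (q + r)" by (simp only: mult_ac)
    finally show ?thesis .
  qed
  have "(cmod (q - r))\<^sup>2 \<le> ((\<delta>0 * exp (L * Re r / (2 * \<nu>))) * cmod (q + r))\<^sup>2"
    by (rule power_mono[OF le]) simp
  thus ?thesis by (simp add: r_def power_mult_distrib)
qed

lemma sup_rho_le_localize:
  assumes L: "L > 0" and w0: "(\<omega>0, k0) \<in> Dinf \<omega>m km" and X0: "Re (sqrt_rad \<omega>0 k0) = X0"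
    and bound: "sup_rho L q \<le> ereal \<delta>0" and t0: "\<delta>0 \<ge> 0" and t1: "\<delta>0 * exp (L * X0 / (2 * \<nu>)) < 1"
  shows "Re q \<ge> (1 - (\<delta>0 * exp (L * X0 / (2 * \<nu>)))\<^sup>2) * X0 / (2 * (1 + (\<delta>0 * exp (L * X0 / (2 * \<nu>)))\<^sup>2))"
    and "cmod q \<le> 2 * X0 * (1 + (\<delta>0 * exp (L * X0 / (2 * \<nu>)))\<^sup>2) / (1 - (\<delta>0 * exp (L * X0 / (2 * \<nu>)))\<^sup>2)"
proof -
  define t where "t = \<delta>0 * exp (L * X0 / (2 * \<nu>))"
  have t: "t \<ge> 0" "t < 1" using t0 t1 by (simp_all add: t_def)
  have X0p: "X0 > 0" using Re_sqrt_rad_pos[OF w0] X0 by simp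
  define r0 where "r0 = sqrt_rad \<omega>0 k0"
  have w0': "(-\<omega>0, -k0) \<in> Dinf \<omega>m km" by (rule Dinf_uminus[OF w0])
  have rn: "sqrt_rad (-\<omega>0) (-k0) = cnj r0" using sqrt_rad_uminus by (simp add: r0_def)
  have s1: "(cmod (q - r0))\<^sup>2 \<le> t\<^sup>2 * (cmod (q + r0))\<^sup>2"
    using sup_rho_le_imp_sq[OF L bound w0] X0 by (simp add: t_def r0_def)
  have s2: "(cmod (q - cnj r0))\<^sup>2 \<le> t\<^sup>2 * (cmod (q + cnj r0))\<^sup>2"
    using sup_rho_le_imp_sq[OF L bound w0'] X0 rn by (simp add: t_def r0_def)
  have h1: "(Re q - X0)\<^sup>2 + (Im q - Im r0)\<^sup>2 \<le> t\<^sup>2 * ((Re q + X0)\<^sup>2 + (Im q + Im r0)\<^sup>2)"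
    using s1 X0 by (simp add: cmod_power2 r0_def)
  have h2: "(Re q - X0)\<^sup>2 + (Im q + Im r0)\<^sup>2 \<le> t\<^sup>2 * ((Re q + X0)\<^sup>2 + (Im q - Im r0)\<^sup>2)"
    using s2 X0 by (simp add: cmod_power2 r0_def)
  note la = localization_ineq[OF h1 h2 X0p t]
  show "Re q \<ge> (1 - (\<delta>0 * exp (L * X0 / (2 * \<nu>)))\<^sup>2) * X0 / (2 * (1 + (\<delta>0 * exp (L * X0 / (2 * \<nu>)))\<^sup>2))"
    using la(1) by (simp add: t_def)
  show "cmod q \<le> 2 * X0 * (1 + (\<delta>0 * exp (L * X0 / (2 * \<nu>)))\<^sup>2) / (1 - (\<delta>0 * exp (L * X0 / (2 * \<nu>)))\<^sup>2)"
    using la(2) by (simp add: t_def cmod_def)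
qed

lemma abs_rho_eq_0:
  assumes "abs_rho L q \<omega> k = 0"
  shows "q = sqrt_rad \<omega> k \<or> q = - sqrt_rad \<omega> k"
proof -
  have "cmod (q - sqrt_rad \<omega> k) / cmod (q + sqrt_rad \<omega> k) = 0" using assms by (simp add: norm_rho_Robin)
  hence "q - sqrt_rad \<omega> k = 0 \<or> q + sqrt_rad \<omega> k = 0" by simp
  thus ?thesis by (auto simp: eq_neg_iff_add_eq_0)
qed

text \<open>\<open>|\<rho>|\<close> vanishes only at \<open>q = \<plusminus>\<lambda>\<close>, and \<open>Re \<lambda>\<close> takes more than one value on \<open>D\<^sup>\<infinity>\<close>.\<close>

lemma sup_rho_pos: "sup_rho L q > 0"
proof (rule ccontr)
  assume "\<not> sup_rho L q > 0"
  then have F0: "sup_rho L q \<le> ereal 0" by (simp add: zero_ereal_def not_less)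
  have zero: "abs_rho L q \<omega> k = 0" if "(\<omega>, k) \<in> Dinf \<omega>m km" for \<omega> k
  proof -
    have "ereal (abs_rho L q \<omega> k) \<le> ereal 0" using abs_rho_le_sup_rho[OF that] F0 by (rule order_trans)
    then show ?thesis using norm_ge_zero[of "rho \<nu> c x0sq \<omega> k q 0 L"] by simp
  qed
  obtain \<omega>0 k0 where w0: "(\<omega>0, k0) \<in> Dinf \<omega>m km" using Dinf_nonempty by blast
  define X0 where "X0 = Re (sqrt_rad \<omega>0 k0)"
  have X0p: "X0 > 0" using Re_sqrt_rad_pos[OF w0] by (simp add: X0_def)
  define a1 where "a1 = x0sq + 4 * \<nu>\<^sup>2 * km\<^sup>2"
  define b1 where "b1 = 4 * \<nu> * (\<omega>m + \<bar>c\<bar> * km)"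
  have a1: "a1 \<ge> 0" and b1: "b1 \<ge> 0" using x0_nn nu_pos wm_pos km_nn by (simp_all add: a1_def b1_def)
  define X1 where "X1 = X0 + 1 + 2 * a1 + b1"
  have X1g: "X1 \<ge> 1" using X0p a1 b1 by (simp add: X1_def)
  then have "X1 \<le> X1\<^sup>2" by (simp add: power2_eq_square)
  then have "X1\<^sup>2 \<ge> 2 * a1" "X1\<^sup>2 \<ge> b1" using X0p a1 b1 by (simp_all add: X1_def)
  then obtain \<omega>1 where w1: "(\<omega>1, km) \<in> Dinf \<omega>m km" "Re (sqrt_rad \<omega>1 km) = X1"
    using exists_Re_sqrt_rad_eq[of X1] X1g by (auto simp: a1_def b1_def)
  have "Re q = X0 \<or> Re q = - X0" using abs_rho_eq_0[OF zero[OF w0]] by (auto simp: X0_def)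
  moreover have "Re q = X1 \<or> Re q = - X1" using abs_rho_eq_0[OF zero[OF w1(1)]] w1(2) by auto
  moreover have "X1 > X0" using a1 b1 by (simp add: X1_def)
  ultimately show False using X0p by auto
qed

lemma sup_rho_Re_less:
  assumes L: "L > 0" and fin: "sup_rho L q < \<infinity>" and Re: "Re q > 0" and Im: "Im q \<noteq> 0"
  shows "sup_rho L (complex_of_real (Re q)) < sup_rho L q"
proof -
  obtain \<delta> where F: "sup_rho L q = ereal \<delta>"
    using fin sup_rho_pos[of L q] by (cases "sup_rho L q") auto
  have ne: "q \<noteq> cnj q" using Im by (metis cnj.simps(2) neg_equal_zero)
  have mid: "(q + cnj q) / 2 = complex_of_real (Re q)" by (simp add: complex_add_cnj)
  have Fc: "sup_rho L (cnj q) \<le> ereal \<delta>" using sup_rho_cnj[of L q] F by simp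
  have "\<delta> > 0" using sup_rho_pos[of L q] F by simp
  then have "sup_rho L (complex_of_real (Re q)) < ereal \<delta>"
    using sup_rho_midpoint_less[OF L ne Re _ _ Fc mid Re] Re F by simp
  then show ?thesis using F by simp
qed

lemma sup_rho_Re_le:
  assumes L: "L > 0" and fin: "sup_rho L q < \<infinity>" and Re: "Re q > 0"
  shows "sup_rho L (complex_of_real (Re q)) \<le> sup_rho L q"
proof (cases "Im q = 0")
  case True
  then have "complex_of_real (Re q) = q" by (simp add: complex_eq_iff)
  then show ?thesis by simp
qed (use sup_rho_Re_less[OF L fin Re] in auto)

lemma sup_rho_sublevel_Re_bounded:
  assumes L: "L > 0" and d0: "\<delta>0 \<ge> 0" and small: "\<delta>0 * exp (L * (Aconst \<nu> c x0sq \<omega>m km / 4) / (2 * \<nu>)) < 1"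
  obtains \<eta> B where "\<eta> > 0" "\<And>q. sup_rho L q \<le> ereal \<delta>0 \<Longrightarrow> Re q \<in> {\<eta>..B}"
proof -
  obtain \<omega>0 k0 where A: "(\<omega>0, k0) \<in> Dinf \<omega>m km" "4 * Re (sqrt_rad \<omega>0 k0) = Aconst \<nu> c x0sq \<omega>m km"
    using Aconst_min_Re_sqrt_rad by blast
  define X0 where "X0 = Re (sqrt_rad \<omega>0 k0)"
  define t where "t = \<delta>0 * exp (L * X0 / (2 * \<nu>))"
  have X0p: "X0 > 0" using Re_sqrt_rad_pos[OF A(1)] by (simp add: X0_def)
  have "Aconst \<nu> c x0sq \<omega>m km / 4 = X0" using A(2) by (simp add: X0_def)
  then have t0: "t \<ge> 0" and t1: "t < 1" using d0 small by (simp_all add: t_def)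
  then have t: "t\<^sup>2 < 1" by (simp add: power_less_one_iff)
  show ?thesis
  proof
    show "(1 - t\<^sup>2) * X0 / (2 * (1 + t\<^sup>2)) > 0" using t X0p by (simp add: add_pos_nonneg)
    fix q assume "sup_rho L q \<le> ereal \<delta>0"
    from sup_rho_le_localize[OF L A(1) X0_def[symmetric] this d0 t1[unfolded t_def]]
    show "Re q \<in> {(1 - t\<^sup>2) * X0 / (2 * (1 + t\<^sup>2)) .. 2 * X0 * (1 + t\<^sup>2) / (1 - t\<^sup>2)}"
      using complex_Re_le_cmod[of q] by (auto simp: t_def X0_def)
  qed
qed

theorem robin_best_approx_unique:
  assumes L: "L > 0" and p0: "p0 > 0" and d0: "\<delta>0 \<ge> 0" and F0: "sup_rho L (complex_of_real p0) \<le> ereal \<delta>0"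
    and small: "\<delta>0 * exp (L * (Aconst \<nu> c x0sq \<omega>m km / 4) / (2 * \<nu>)) < 1"
  shows "\<exists>p>0. sup_rho L (complex_of_real p) \<le> ereal \<delta>0 \<and>
           (\<forall>q. sup_rho L (complex_of_real p) \<le> sup_rho L q \<and> (sup_rho L q = sup_rho L (complex_of_real p) \<longrightarrow> q = complex_of_real p))"
proof -
  obtain \<eta> B where eta: "\<eta> > 0" and loc: "\<And>q. sup_rho L q \<le> ereal \<delta>0 \<Longrightarrow> Re q \<in> {\<eta>..B}"
    using sup_rho_sublevel_Re_bounded[OF L d0 small] by blast
  have Fy: "sup_rho L (complex_of_real y) = ereal (sup_rho_real L y)" if "y \<in> {\<eta>..B}" for y
    using sup_rho_real_eq[of L y] L that eta by simp
  have p0I: "p0 \<in> {\<eta>..B}" using loc[OF F0] by simp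
  obtain ps where ps: "ps \<in> {\<eta>..B}" "\<And>y. y \<in> {\<eta>..B} \<Longrightarrow> sup_rho_real L ps \<le> sup_rho_real L y"
    using continuous_attains_inf[OF compact_Icc _ continuous_on_sup_rho_real[of L \<eta> B]] p0I L eta by auto
  have psp: "ps > 0" using ps(1) eta by simp
  have min_real: "sup_rho L (complex_of_real ps) \<le> sup_rho L (complex_of_real y)" if "y \<in> {\<eta>..B}" for y
    using Fy[OF that] Fy[OF ps(1)] ps(2)[OF that] by simp
  have Fps_le: "sup_rho L (complex_of_real ps) \<le> ereal \<delta>0" using min_real[OF p0I] F0 by (rule order_trans)
  have fin: "sup_rho L q < \<infinity>" if "sup_rho L q \<le> ereal \<delta>0" for q
    by (rule order_le_less_trans[OF that]) simp
  have Re_pos: "Re q > 0" if "sup_rho L q \<le> ereal \<delta>0" for q using loc[OF that] eta by auto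
  have minimal: "sup_rho L (complex_of_real ps) \<le> sup_rho L q" for q
  proof (cases "sup_rho L q \<le> ereal \<delta>0")
    case True show ?thesis
      using order_trans[OF min_real[OF loc[OF True]] sup_rho_Re_le[OF L fin[OF True] Re_pos[OF True]]] .
  qed (use Fps_le in auto)
  have unique: "q = complex_of_real ps" if eq: "sup_rho L q = sup_rho L (complex_of_real ps)" for q
  proof -
    have Fq: "sup_rho L q \<le> ereal \<delta>0" using eq Fps_le by simp
    have R: "Re q \<in> {\<eta>..B}" by (rule loc[OF Fq])
    have "Im q = 0"
    proof (rule ccontr)
      assume "Im q \<noteq> 0"
      from sup_rho_Re_less[OF L fin[OF Fq] Re_pos[OF Fq] this] min_real[OF R] eq show False by simp
    qed
    then have qR: "q = complex_of_real (Re q)" by (simp add: complex_eq_iff)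
    show ?thesis
    proof (rule ccontr)
      assume "q \<noteq> complex_of_real ps"
      then have ne: "complex_of_real ps \<noteq> complex_of_real (Re q)" using qR by simp
      define m where "m = (ps + Re q) / 2"
      have mI: "m \<in> {\<eta>..B}" using R ps(1) by (simp add: m_def)
      have "sup_rho L (complex_of_real m) < ereal (sup_rho_real L ps)"
        by (rule sup_rho_midpoint_less[OF L ne])
           (use psp R eta Fy[OF ps(1)] eq qR sup_rho_pos[of L "complex_of_real ps"] in \<open>auto simp: m_def\<close>)
      then show False using min_real[OF mI] Fy[OF ps(1)] by simp
    qed
  qed
  show ?thesis using psp Fps_le minimal unique by blast
qed

section \<open>Asymptotics as \<open>L \<rightarrow> 0\<close>\<close>

definition A0 where "A0 = Aconst \<nu> c x0sq \<omega>m km"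
definition p0 where "p0 L = (1/2) * root 3 (\<nu> * A0\<^sup>2 / L)"
definition aL where "aL L = A0 / p0 L"

lemma A0_props: "A0 > 0" "\<And>\<omega> k. (\<omega>, k) \<in> Dinf \<omega>m km \<Longrightarrow> Re (sqrt_rad \<omega> k) \<ge> A0 / 4"
    "\<exists>\<omega>0 k0. (\<omega>0, k0) \<in> Dinf \<omega>m km \<and> Re (sqrt_rad \<omega>0 k0) = A0 / 4"
proof -
  obtain \<omega>0 k0 where A: "(\<omega>0, k0) \<in> Dinf \<omega>m km" "4 * Re (sqrt_rad \<omega>0 k0) = A0"
      "\<And>\<omega> k. (\<omega>, k) \<in> Dinf \<omega>m km \<Longrightarrow> 4 * Re (sqrt_rad \<omega> k) \<ge> A0"
    using Aconst_min_Re_sqrt_rad unfolding A0_def by blast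
  show "A0 > 0" using Re_sqrt_rad_pos[OF A(1)] A(2) by simp
  show "\<And>\<omega> k. (\<omega>, k) \<in> Dinf \<omega>m km \<Longrightarrow> Re (sqrt_rad \<omega> k) \<ge> A0 / 4" using A(3) by fastforce
  show "\<exists>\<omega>0 k0. (\<omega>0, k0) \<in> Dinf \<omega>m km \<and> Re (sqrt_rad \<omega>0 k0) = A0 / 4" using A(1,2) by (intro exI[of _ \<omega>0] exI[of _ k0]) simp
qed

lemma p0_props:
  assumes L: "L > 0"
  shows "p0 L > 0" "aL L > 0" "p0 L = A0 / aL L" "L / \<nu> = (aL L)^3 / (8 * A0)"
proof -
  have Ap: "A0 > 0" by (rule A0_props(1))
  have arg: "\<nu> * A0\<^sup>2 / L > 0" using nu_pos Ap L by simp
  show pp: "p0 L > 0" unfolding p0_def using arg by simp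
  show "aL L > 0" unfolding aL_def using pp Ap by simp
  show "p0 L = A0 / aL L" unfolding aL_def using pp Ap by simp
  have cube: "(p0 L)^3 = \<nu> * A0\<^sup>2 / (8 * L)"
  proof -
    have "(root 3 (\<nu> * A0\<^sup>2 / L))^3 = \<nu> * A0\<^sup>2 / L" using arg by (simp add: real_root_pow_pos2)
    moreover have "((1/2) * root 3 (\<nu> * A0\<^sup>2 / L))^3 = (1/8) * (root 3 (\<nu> * A0\<^sup>2 / L))^3"
      by (simp add: power_mult_distrib power_divide)
    ultimately show ?thesis unfolding p0_def by simp
  qed
  show "L / \<nu> = (aL L)^3 / (8 * A0)"
    unfolding aL_def using cube pp Ap L nu_pos by (simp add: power_divide field_simps power2_eq_square power3_eq_cube)
qed

lemma gain_plus_damping_at_p0: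
  assumes L: "L > 0" and w: "(\<omega>, k) \<in> Dinf \<omega>m km"
  defines "X \<equiv> Re (sqrt_rad \<omega> k)"
  shows "aL L - (aL L)\<^sup>2 \<le> 4 * p0 L * X / ((p0 L + X)\<^sup>2 + X\<^sup>2) + L * X / \<nu>"
proof -
  define a where "a = aL L"
  define p where "p = p0 L"
  define y where "y = X / p"
  have ap: "a > 0" and p: "p > 0" and pa: "p = A0 / a" and La: "L / \<nu> = a^3 / (8 * A0)"
    using p0_props[OF L] by (simp_all add: a_def p_def)
  have Ap: "A0 > 0" by (rule A0_props(1))
  have XA: "X \<ge> A0 / 4" using A0_props(2)[OF w] by (simp add: X_def)
  then have yp: "y > 0" using Ap p by (simp add: y_def)
  have "a / 4 = (A0 / 4) / p" using pa ap p by (simp add: field_simps)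
  also have "\<dots> \<le> y" unfolding y_def using p by (intro divide_right_mono XA) simp
  finally have ya: "a / 4 \<le> y" .
  have d: "(p + X)\<^sup>2 + X\<^sup>2 = p\<^sup>2 * (1 + 2*y + 2*y\<^sup>2)" and n: "4 * p * X = p\<^sup>2 * (4*y)"
    using p by (simp_all add: y_def field_simps power2_eq_square)
  have gain: "4 * p * X / ((p + X)\<^sup>2 + X\<^sup>2) = 4 * y / (1 + 2*y + 2*y\<^sup>2)" unfolding d n using p by simp
  have damp: "L * X / \<nu> = a\<^sup>2 * y / 8"
  proof -
    have "L * X / \<nu> = a^3 / (8 * A0) * X" by (simp add: La[symmetric])
    also have "\<dots> = a\<^sup>2 * y / 8" using pa ap Ap p by (simp add: y_def field_simps power2_eq_square power3_eq_cube)
    finally show ?thesis .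
  qed
  show ?thesis unfolding a_def[symmetric] p_def[symmetric] gain damp
    by (rule exp_gain_bound) (use ap ya yp in auto)
qed

lemma sup_rho_p0_le:
  assumes L: "L > 0"
  shows "sup_rho L (complex_of_real (p0 L)) \<le> ereal (exp (- (aL L - (aL L)\<^sup>2) / 2))"
proof (rule sup_rho_le)
  fix \<omega> k assume w: "(\<omega>, k) \<in> Dinf \<omega>m km"
  define a where "a = aL L"
  define p where "p = p0 L"
  define X where "X = Re (sqrt_rad \<omega> k)"
  define u where "u = 4 * p * X / ((p + X)\<^sup>2 + X\<^sup>2)"
  have p: "p > 0" using p0_props(1)[OF L] by (simp add: p_def)
  have "(abs_rho L (complex_of_real p) \<omega> k)\<^sup>2 \<le> (1 - u) * exp (- (L * X / \<nu>))"
    using abs_rho_real_sq_le[OF w p, where L=L] by (simp add: u_def X_def)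
  also have "\<dots> \<le> exp (- u) * exp (- (L * X / \<nu>))"
    using exp_ge_add_one_self[of "-u"] by (intro mult_right_mono) auto
  also have "\<dots> = exp (- (u + L * X / \<nu>))" by (simp add: exp_add[symmetric])
  also have "\<dots> \<le> exp (- (a - a\<^sup>2))"
    using gain_plus_damping_at_p0[OF L w] by (simp add: u_def a_def p_def X_def)
  also have "\<dots> = (exp (- (a - a\<^sup>2) / 2))\<^sup>2" by (simp add: power2_eq_square exp_add[symmetric])
  finally have "(abs_rho L (complex_of_real p) \<omega> k)\<^sup>2 \<le> (exp (- (a - a\<^sup>2) / 2))\<^sup>2" .
  from power2_le_imp_le[OF this] show "abs_rho L (complex_of_real (p0 L)) \<omega> k \<le> exp (- (aL L - (aL L)\<^sup>2) / 2)"
    by (simp add: a_def p_def)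
qed

lemma sup_rho_real_sq_ge_low:
  assumes L: "L > 0" and p: "p > 0"
  shows "(sup_rho_real L p)\<^sup>2 \<ge> (1 - A0 / p) * exp (- ((aL L)^3 / 32))"
proof -
  obtain \<omega>0 k0 where w0: "(\<omega>0, k0) \<in> Dinf \<omega>m km" "Re (sqrt_rad \<omega>0 k0) = A0 / 4" using A0_props(3) by blast
  have La: "L / \<nu> = (aL L)^3 / (8 * A0)" using p0_props[OF L] by simp
  have Ap: "A0 > 0" by (rule A0_props(1))
  have h0: "(1 - 4 * (A0/4) / p) * exp (- (L * (A0/4) / \<nu>)) \<le> (abs_rho L (complex_of_real p) \<omega>0 k0)\<^sup>2"
    using abs_rho_real_sq_ge[OF w0(1) p, where L=L] w0(2) by simp
  have eqn: "L * (A0/4) / \<nu> = (aL L)^3 / 32"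
  proof -
    have "L * (A0/4) / \<nu> = (L / \<nu>) * (A0 / 4)" by simp
    also have "\<dots> = (aL L)^3 / 32" unfolding La using Ap by simp
    finally show ?thesis .
  qed
  have eq2: "4 * (A0/4) / p = A0 / p" by simp
  have h1: "(1 - A0 / p) * exp (- ((aL L)^3 / 32)) \<le> (abs_rho L (complex_of_real p) \<omega>0 k0)\<^sup>2"
    using h0 by (simp only: eqn eq2)
  have "abs_rho L (complex_of_real p) \<omega>0 k0 \<le> sup_rho_real L p" using abs_rho_le_sup_rho_real[OF _ _ w0(1)] L p by simp
  hence h2: "(abs_rho L (complex_of_real p) \<omega>0 k0)\<^sup>2 \<le> (sup_rho_real L p)\<^sup>2" by (intro power_mono) simp_all
  show ?thesis using h1 h2 by (rule order_trans)
qed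

definition a1c where "a1c = x0sq + 4 * \<nu>\<^sup>2 * km\<^sup>2"
definition b1c where "b1c = 4 * \<nu> * (\<omega>m + \<bar>c\<bar> * km)"

text \<open>For \<open>a \<le> kap\<close> the value \<open>X1 = 4 A0 / a\<^sup>2\<close> is so large that it is attained by
  \<open>Re \<lambda>\<close> at \<open>k = km\<close> (\<open>exists_Re_sqrt_rad_eq\<close>), with \<open>Im \<lambda>\<^sup>2 = X1\<^sup>2 - a1c\<close>.\<close>

definition kap where "kap = min 1 (A0\<^sup>2 / (a1c + b1c + 1))"

lemma a1c_b1c_nonneg: "a1c \<ge> 0" "b1c \<ge> 0"
  using x0_nn nu_pos wm_pos km_nn by (simp_all add: a1c_def b1c_def)

lemma kap_pos: "kap > 0"
  using a1c_b1c_nonneg A0_props(1) by (simp add: kap_def)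

lemma X1_big:
  assumes ap: "a > 0" and ak: "a \<le> kap"
  shows "(4 * A0 / a\<^sup>2)\<^sup>2 \<ge> 16 * (a1c + b1c + 1)" "a * a1c \<le> A0\<^sup>2"
proof -
  define X1 where "X1 = 4 * A0 / a\<^sup>2"
  note a1 = a1c_b1c_nonneg
  have a_le1: "a \<le> 1" and a_le: "a \<le> A0\<^sup>2 / (a1c + b1c + 1)" using ak by (simp_all add: kap_def)
  have aa: "a * (a1c + b1c + 1) \<le> A0\<^sup>2" using a_le a1 by (simp add: field_simps)
  have "a * a1c \<le> a * (a1c + b1c + 1)" using ap a1 by (intro mult_left_mono) auto
  then show "a * a1c \<le> A0\<^sup>2" using aa by linarith
  have "a^4 \<le> a" using power_decreasing[of 1 4 a] ap a_le1 by simp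
  then have "a^4 * (a1c + b1c + 1) \<le> a * (a1c + b1c + 1)" using a1 by (intro mult_right_mono) auto
  then have "a^4 * (a1c + b1c + 1) \<le> A0\<^sup>2" using aa by linarith
  moreover have "X1\<^sup>2 = 16 * A0\<^sup>2 / a^4"
    by (simp add: X1_def power_divide power_mult_distrib power2_eq_square[of a] power4_eq_xxxx)
  ultimately have "16 * (a1c + b1c + 1) * a^4 \<le> X1\<^sup>2 * a^4" using ap by (simp add: field_simps)
  then have "16 * (a1c + b1c + 1) \<le> X1\<^sup>2" by (rule mult_right_le_imp_le) (use ap in simp)
  then show "(4 * A0 / a\<^sup>2)\<^sup>2 \<ge> 16 * (a1c + b1c + 1)" by (simp add: X1_def)
qed

lemma sup_rho_real_sq_ge_high:
  assumes L: "L > 0" and p: "p > 0" and ak: "aL L \<le> kap"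
  defines "X1 \<equiv> 4 * A0 / (aL L)\<^sup>2"
  shows "(sup_rho_real L p)\<^sup>2 \<ge> (1 - 4 * p * X1 / (2 * X1\<^sup>2 - a1c)) * exp (- (aL L / 2))"
proof -
  define a where "a = aL L"
  have ap: "a > 0" using p0_props[OF L] by (simp add: a_def)
  have Ap: "A0 > 0" by (rule A0_props(1))
  note a1 = a1c_b1c_nonneg
  have X1p: "X1 > 0" using Ap ap by (simp add: X1_def a_def)
  have big: "X1\<^sup>2 \<ge> 16 * (a1c + b1c + 1)" using X1_big(1)[OF ap] ak by (simp add: X1_def a_def)
  then have c1: "X1\<^sup>2 \<ge> 2 * (x0sq + 4 * \<nu>\<^sup>2 * km\<^sup>2)" and c2: "X1\<^sup>2 \<ge> 4 * \<nu> * (\<omega>m + \<bar>c\<bar> * km)"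
    using a1 by (simp_all add: a1c_def[symmetric] b1c_def[symmetric])
  obtain \<omega>1 where w1: "(\<omega>1, km) \<in> Dinf \<omega>m km" "Re (sqrt_rad \<omega>1 km) = X1"
      "(Im (sqrt_rad \<omega>1 km))\<^sup>2 = X1\<^sup>2 - a1c"
    using exists_Re_sqrt_rad_eq[OF X1p c1 c2] by (auto simp: a1c_def)
  define D where "D = (p + X1)\<^sup>2 + (Im (sqrt_rad \<omega>1 km))\<^sup>2"
  have "16 * a1c + 16 * b1c + 16 \<le> X1\<^sup>2" using big by simp
  then have den: "2 * X1\<^sup>2 - a1c > 0" using a1 by linarith
  have "D = (p * p + 2 * p * X1) + (2 * X1\<^sup>2 - a1c)"
    using w1(3) by (simp add: D_def power2_eq_square algebra_simps)
  moreover have "p * p + 2 * p * X1 \<ge> 0" using p X1p by simp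
  ultimately have dp: "D \<ge> 2 * X1\<^sup>2 - a1c" by linarith
  have "4 * p * X1 / D \<le> 4 * p * X1 / (2 * X1\<^sup>2 - a1c)"
    using dp den p X1p by (intro divide_left_mono) (auto intro!: mult_pos_pos)
  then have g: "1 - 4 * p * X1 / (2 * X1\<^sup>2 - a1c) \<le> 1 - 4 * p * X1 / D" by simp
  have LX: "L * X1 / \<nu> = a / 2"
  proof -
    have "L * X1 / \<nu> = (L / \<nu>) * X1" by simp
    also have "\<dots> = a^3 / (8 * A0) * X1" using p0_props(4)[OF L] by (simp add: a_def)
    also have "\<dots> = a / 2" using ap Ap by (simp add: X1_def a_def field_simps power2_eq_square power3_eq_cube)
    finally show ?thesis .
  qed
  have "(abs_rho L (complex_of_real p) \<omega>1 km)\<^sup>2 = (1 - 4 * p * X1 / D) * exp (- (L * X1 / \<nu>))"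
    using abs_rho_real_sq[where \<omega>=\<omega>1 and k=km and p=p and L=L] dp den w1(2) by (simp add: D_def)
  then have "(abs_rho L (complex_of_real p) \<omega>1 km)\<^sup>2 \<ge> (1 - 4 * p * X1 / (2 * X1\<^sup>2 - a1c)) * exp (- (a / 2))"
    using g LX by (simp add: mult_right_mono)
  moreover have "abs_rho L (complex_of_real p) \<omega>1 km \<le> sup_rho_real L p"
    using abs_rho_le_sup_rho_real[OF _ _ w1(1)] L p by simp
  then have "(abs_rho L (complex_of_real p) \<omega>1 km)\<^sup>2 \<le> (sup_rho_real L p)\<^sup>2" by (intro power_mono) simp_all
  ultimately show ?thesis by (simp add: a_def)
qed

lemma aL_tendsto_0: "filterlim aL (at_right 0) (at_right 0)"
proof (rule tendsto_imp_filterlim_at_right)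
  show ev: "eventually (\<lambda>L. aL L > 0) (at_right 0)"
    using eventually_at_right_less[of "0::real"] by eventually_elim (use p0_props in auto)
  show "(aL \<longlongrightarrow> 0) (at_right 0)"
  proof (rule order_tendstoI)
    fix e :: real assume "e < 0"
    show "eventually (\<lambda>L. e < aL L) (at_right 0)" using ev by eventually_elim (use \<open>e < 0\<close> in auto)
  next
    fix e :: real assume e: "0 < e"
    have Ap: "A0 > 0" by (rule A0_props(1))
    define b where "b = \<nu> * e^3 / (8 * A0)"
    have b: "b > 0" using e nu_pos Ap by (simp add: b_def)
    show "eventually (\<lambda>L. aL L < e) (at_right 0)"
      unfolding eventually_at_right_field
    proof (intro exI[of _ b] conjI b allI impI)
      fix L :: real assume L: "0 < L" "L < b"
      have "(aL L)^3 = 8 * A0 * (L / \<nu>)" using p0_props(4)[OF L(1)] Ap by (simp add: field_simps)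
      also have "\<dots> < 8 * A0 * (b / \<nu>)" using L nu_pos Ap by (simp add: divide_strict_right_mono)
      also have "\<dots> = e^3" using nu_pos Ap by (simp add: b_def)
      finally show "aL L < e" by (rule power_less_imp_less_base) (use e in simp)
    qed
  qed
qed

definition small_overlap where
  "small_overlap L \<longleftrightarrow> L > 0 \<and> aL L \<le> kap \<and> aL L - (aL L)\<^sup>2 - (aL L)^3/32 > 0 \<and>
     aL L/2 - (aL L)\<^sup>2 > 0 \<and> ratio_lo (aL L) > aL L"

lemma eventually_small_overlap: "eventually small_overlap (at_right 0)"
proof -
  have "eventually (\<lambda>a::real. a < kap) (at_right 0)"
    unfolding eventually_at_right_field using kap_pos by (intro exI[of _ kap]) auto
  then have "eventually (\<lambda>L. aL L < kap) (at_right 0)"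
    using aL_tendsto_0 by (rule eventually_compose_filterlim)
  moreover have "eventually (\<lambda>L. aL L - (aL L)\<^sup>2 - (aL L)^3/32 > 0 \<and> aL L/2 - (aL L)\<^sup>2 > 0 \<and> ratio_lo (aL L) > aL L) (at_right 0)"
    using eventually_small_a aL_tendsto_0 by (rule eventually_compose_filterlim)
  ultimately show ?thesis using eventually_at_right_less[of "0::real"]
    by eventually_elim (auto simp: small_overlap_def)
qed

definition near_optimal :: "real \<Rightarrow> real \<Rightarrow> bool" where
  "near_optimal L p \<longleftrightarrow> small_overlap L \<and> p > 0 \<and>
     sup_rho L (complex_of_real p) \<le> ereal (exp (- (aL L - (aL L)\<^sup>2) / 2))"

lemma near_optimal_sup_bounds:
  assumes "near_optimal L p"
  shows "0 \<le> sup_rho_real L p" "sup_rho_real L p \<le> exp (- (aL L - (aL L)\<^sup>2) / 2)"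
    "exp (- (aL L - (aL L)\<^sup>2) / 2) < 1" "(sup_rho_real L p)\<^sup>2 \<le> exp (- (aL L - (aL L)\<^sup>2))"
proof -
  have L: "L > 0" and p: "p > 0" and F: "sup_rho L (complex_of_real p) \<le> ereal (exp (- (aL L - (aL L)\<^sup>2) / 2))"
    and P1: "aL L - (aL L)\<^sup>2 - (aL L)^3/32 > 0"
    using assms by (simp_all add: near_optimal_def small_overlap_def)
  show d0: "0 \<le> sup_rho_real L p" using sup_rho_real_range[of L p] L p by simp
  show dd: "sup_rho_real L p \<le> exp (- (aL L - (aL L)\<^sup>2) / 2)" using F sup_rho_real_eq[of L p] L p by simp
  have "(aL L)^3 / 32 > 0" using p0_props(2)[OF L] by simp
  then have "aL L - (aL L)\<^sup>2 > 0" using P1 by linarith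
  then show "exp (- (aL L - (aL L)\<^sup>2) / 2) < 1" by simp
  have "(sup_rho_real L p)\<^sup>2 \<le> (exp (- (aL L - (aL L)\<^sup>2) / 2))\<^sup>2" using d0 dd by (intro power_mono)
  also have "\<dots> = exp (- (aL L - (aL L)\<^sup>2))" by (simp add: power2_eq_square exp_add[symmetric])
  finally show "(sup_rho_real L p)\<^sup>2 \<le> exp (- (aL L - (aL L)\<^sup>2))" .
qed

lemma near_optimal_ratio_le:
  assumes opt: "near_optimal L p"
  shows "p / p0 L \<le> ratio_hi (aL L)"
proof -
  define a where "a = aL L"
  define E1 where "E1 = exp (-(a - a\<^sup>2) + a^3/32)"
  have L: "L > 0" and p: "p > 0" and P1: "a - a\<^sup>2 - a^3/32 > 0"
    using opt by (simp_all add: near_optimal_def small_overlap_def a_def)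
  have ap: "a > 0" using p0_props[OF L] by (simp add: a_def)
  have Ap: "A0 > 0" by (rule A0_props(1))
  have "(1 - A0 / p) * exp (- (a^3 / 32)) \<le> exp (- (a - a\<^sup>2))"
    using sup_rho_real_sq_ge_low[OF L p] near_optimal_sup_bounds(4)[OF opt] by (simp add: a_def)
  then have "(1 - A0 / p) * exp (- (a^3 / 32)) * exp (a^3/32) \<le> exp (- (a - a\<^sup>2)) * exp (a^3/32)"
    by (rule mult_right_mono) simp
  then have "1 - E1 \<le> A0 / p" by (simp add: E1_def exp_add[symmetric] mult.assoc)
  moreover have "E1 < 1" using P1 by (simp add: E1_def)
  ultimately have "a / (A0 / p) \<le> a / (1 - E1)" using ap Ap p by (intro divide_left_mono) auto
  moreover have "p / p0 L = a / (A0 / p)" using p0_props(3)[OF L] p Ap by (simp add: a_def)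
  ultimately show ?thesis by (simp add: ratio_hi_def E1_def a_def)
qed

lemma near_optimal_ratio_ge:
  assumes opt: "near_optimal L p"
  shows "ratio_lo (aL L) \<le> p / p0 L"
proof -
  define a where "a = aL L"
  define X1 where "X1 = 4 * A0 / a\<^sup>2"
  define Den where "Den = 2 * X1\<^sup>2 - a1c"
  define Q where "Q = 4 * p * X1 / Den"
  define E2 where "E2 = exp (-a/2 + a\<^sup>2)"
  have L: "L > 0" and p: "p > 0" and ak: "a \<le> kap" and P2: "a/2 - a\<^sup>2 > 0" and P3: "ratio_lo a > a"
    using opt by (simp_all add: near_optimal_def small_overlap_def a_def)
  have ap: "a > 0" using p0_props[OF L] by (simp add: a_def)
  have Ap: "A0 > 0" by (rule A0_props(1))
  note a1 = a1c_b1c_nonneg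
  have X1p: "X1 > 0" using Ap ap by (simp add: X1_def)
  have Denp: "Den > 0" using X1_big(1)[OF ap ak] a1 by (simp add: Den_def X1_def)
  have "(1 - Q) * exp (- (a / 2)) \<le> exp (- (a - a\<^sup>2))"
    using sup_rho_real_sq_ge_high[OF L p] near_optimal_sup_bounds(4)[OF opt] ak
    by (simp add: a_def Q_def Den_def X1_def)
  then have "(1 - Q) * exp (- (a / 2)) * exp (a / 2) \<le> exp (- (a - a\<^sup>2)) * exp (a / 2)"
    by (rule mult_right_mono) simp
  moreover have "- (a - a\<^sup>2) + a / 2 = -a/2 + a\<^sup>2" by simp
  ultimately have QE: "1 - E2 \<le> Q" by (simp add: E2_def exp_add[symmetric] mult.assoc)
  have E2p: "1 - E2 > 0" using P2 by (simp add: E2_def)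
  have p_eq: "p = Q * Den / (4 * X1)" using Denp X1p by (simp add: Q_def)
  have "p / p0 L = p * a / A0" using p0_props(3)[OF L] by (simp add: a_def)
  also have "\<dots> = Q * (Den * a / (4 * X1 * A0))" unfolding p_eq by simp
  also have "Den * a / (4 * X1 * A0) = 2/a - a1c * a^3 / (16 * A0\<^sup>2)"
    using ap Ap by (simp add: Den_def X1_def field_simps power2_eq_square power3_eq_cube)
  finally have ratio: "p / p0 L = Q * (2/a - a1c * a^3 / (16 * A0\<^sup>2))" .
  have "a1c * a^3 = (a * a1c) * a\<^sup>2" by (simp add: power2_eq_square power3_eq_cube)
  also have "\<dots> \<le> A0\<^sup>2 * a\<^sup>2" using X1_big(2)[OF ap ak] by (intro mult_right_mono) auto
  also have "\<dots> \<le> 16 * A0\<^sup>2 * a\<^sup>2" by simp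
  finally have small: "a1c * a^3 / (16 * A0\<^sup>2) \<le> a\<^sup>2" using Ap by (simp add: field_simps)
  have "ratio_lo a > 0" using P3 ap by simp
  then have pos: "2/a - a\<^sup>2 > 0" using E2p by (simp add: ratio_lo_def E2_def zero_less_mult_iff)
  have "ratio_lo a = (1 - E2) * (2/a - a\<^sup>2)" by (simp add: ratio_lo_def E2_def)
  also have "\<dots> \<le> Q * (2/a - a1c * a^3 / (16 * A0\<^sup>2))"
    using QE small pos E2p by (intro mult_mono) auto
  finally show ?thesis using ratio by (simp add: a_def)
qed

lemma near_optimal_gain_bounds:
  assumes opt: "near_optimal L p"
  shows "gain_lo (aL L) \<le> 2 * p * (1 - sup_rho_real L p) / A0"
    and "2 * p * (1 - sup_rho_real L p) / A0 \<le> gain_hi (aL L)"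
proof -
  define a where "a = aL L"
  define \<delta> where "\<delta> = sup_rho_real L p"
  define \<delta>0 where "\<delta>0 = exp (- (a - a\<^sup>2) / 2)"
  define \<rho> where "\<rho> = p / p0 L"
  have L: "L > 0" and p: "p > 0" and P3: "ratio_lo a > a"
    using opt by (simp_all add: near_optimal_def small_overlap_def a_def)
  have ap: "a > 0" using p0_props[OF L] by (simp add: a_def)
  have Ap: "A0 > 0" by (rule A0_props(1))
  have d0: "\<delta> \<ge> 0" and dd: "\<delta> \<le> \<delta>0" and d01: "\<delta>0 < 1"
    using near_optimal_sup_bounds[OF opt] by (simp_all add: \<delta>_def \<delta>0_def a_def)
  have lo: "ratio_lo a \<le> \<rho>" and hi: "\<rho> \<le> ratio_hi a"
    using near_optimal_ratio_ge[OF opt] near_optimal_ratio_le[OF opt] by (simp_all add: \<rho>_def a_def)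
  have lo_pos: "ratio_lo a > 0" using P3 ap by simp
  have R_eq: "2 * p * (1 - \<delta>) / A0 = 2 * \<rho> * (1 - \<delta>) / a"
    using p0_props(3)[OF L] ap Ap by (simp add: \<rho>_def a_def field_simps)
  have "ratio_lo a * (1 - \<delta>0) \<le> \<rho> * (1 - \<delta>)" using lo dd d01 lo_pos by (intro mult_mono) auto
  then have "gain_lo a \<le> 2 * \<rho> * (1 - \<delta>) / a" using ap by (simp add: gain_lo_def \<delta>0_def divide_right_mono)
  then show "gain_lo (aL L) \<le> 2 * p * (1 - sup_rho_real L p) / A0" using R_eq by (simp add: a_def \<delta>_def)
  define S where "S = (1 - a / ratio_lo a) * exp (- (a^3/32))"
  have "A0 / p = a / \<rho>" using p0_props(3)[OF L] p Ap ap by (simp add: \<rho>_def a_def)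
  also have "\<dots> \<le> a / ratio_lo a" using lo lo_pos ap by (intro divide_left_mono) auto
  finally have "S \<le> (1 - A0 / p) * exp (- (a^3 / 32))" unfolding S_def by (intro mult_right_mono) auto
  also have "\<dots> \<le> \<delta>\<^sup>2" using sup_rho_real_sq_ge_low[OF L p] by (simp add: \<delta>_def a_def)
  finally have "sqrt S \<le> \<delta>" using d0 real_sqrt_le_mono[of S "\<delta>\<^sup>2"] by simp
  then have "\<rho> * (1 - \<delta>) \<le> ratio_hi a * (1 - sqrt S)"
    using hi dd d01 lo lo_pos by (intro mult_mono) auto
  then have "2 * \<rho> * (1 - \<delta>) / a \<le> gain_hi a" using ap by (simp add: gain_hi_def S_def divide_right_mono)
  then show "2 * p * (1 - sup_rho_real L p) / A0 \<le> gain_hi (aL L)" using R_eq by (simp add: a_def \<delta>_def)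
qed

definition robin_minimizer where
  "robin_minimizer L p \<longleftrightarrow> near_optimal L p \<and>
     (\<forall>q. sup_rho L (complex_of_real p) \<le> sup_rho L q \<and> (sup_rho L q = sup_rho L (complex_of_real p) \<longrightarrow> q = complex_of_real p))"

lemma robin_minimizer_sup_finite:
  assumes "robin_minimizer L p"
  shows "sup_rho L (complex_of_real p) < \<infinity>"
proof -
  have "sup_rho L (complex_of_real p) \<le> ereal (exp (- (aL L - (aL L)\<^sup>2) / 2))"
    using assms by (simp add: robin_minimizer_def near_optimal_def)
  then show ?thesis by (rule order_le_less_trans) simp
qed

lemma robin_minimizer_exists:
  assumes small: "small_overlap L"
  shows "\<exists>p. robin_minimizer L p"
proof -
  have L: "L > 0" and P1: "aL L - (aL L)\<^sup>2 - (aL L)^3/32 > 0" using small by (simp_all add: small_overlap_def)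
  have "L * (Aconst \<nu> c x0sq \<omega>m km / 4) / (2 * \<nu>) = (L / \<nu>) * (A0 / 8)" by (simp add: A0_def)
  also have "\<dots> = (aL L)^3 / 64" unfolding p0_props(4)[OF L] using A0_props(1) by simp
  finally have ex: "L * (Aconst \<nu> c x0sq \<omega>m km / 4) / (2 * \<nu>) = (aL L)^3 / 64" .
  have "exp (- (aL L - (aL L)\<^sup>2) / 2) * exp (L * (Aconst \<nu> c x0sq \<omega>m km / 4) / (2 * \<nu>))
      = exp (- (aL L - (aL L)\<^sup>2 - (aL L)^3/32) / 2)"
    unfolding ex exp_add[symmetric] by (simp add: field_simps)
  also have "\<dots> < 1" using P1 by simp
  finally obtain p where "p > 0" "sup_rho L (complex_of_real p) \<le> ereal (exp (- (aL L - (aL L)\<^sup>2) / 2))"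
      "\<forall>q. sup_rho L (complex_of_real p) \<le> sup_rho L q \<and> (sup_rho L q = sup_rho L (complex_of_real p) \<longrightarrow> q = complex_of_real p)"
    using robin_best_approx_unique[OF L p0_props(1)[OF L] _ sup_rho_p0_le[OF L]] by auto
  then show ?thesis using small unfolding robin_minimizer_def near_optimal_def by blast
qed

theorem robin_asymptotics:
  "\<exists>L0 > 0. \<exists>pstar :: real \<Rightarrow> complex.
     (\<forall>L \<in> {0<..<L0}. sup_rho L (pstar L) < \<infinity> \<and> (\<forall>q. sup_rho L (pstar L) \<le> sup_rho L q \<and> (sup_rho L q = sup_rho L (pstar L) \<longrightarrow> q = pstar L)))
     \<and> (pstar \<sim>[at_right 0] (\<lambda>L. complex_of_real ((1/2) * root 3 (\<nu> * A0\<^sup>2 / L))))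
     \<and> ((\<lambda>L. 1 - complex_of_real (real_of_ereal (sup_rho L (pstar L)))) \<sim>[at_right 0] (\<lambda>L. complex_of_real A0 / (2 * pstar L)))"
proof -
  obtain L0 where L0: "L0 > 0" "\<And>L. 0 < L \<Longrightarrow> L < L0 \<Longrightarrow> small_overlap L"
    using eventually_small_overlap unfolding eventually_at_right_field by auto
  define ps where "ps L = (SOME p. robin_minimizer L p)" for L
  define pstar where "pstar L = complex_of_real (ps L)" for L
  have minimizer: "robin_minimizer L (ps L)" if "small_overlap L" for L
    unfolding ps_def using robin_minimizer_exists[OF that] by (rule someI_ex)
  have optimal: "\<forall>L \<in> {0<..<L0}. sup_rho L (pstar L) < \<infinity> \<and>
      (\<forall>q. sup_rho L (pstar L) \<le> sup_rho L q \<and> (sup_rho L q = sup_rho L (pstar L) \<longrightarrow> q = pstar L))"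
  proof
    fix L assume "L \<in> {0<..<L0}"
    then have opt: "robin_minimizer L (ps L)" using L0(2) minimizer by simp
    then show "sup_rho L (pstar L) < \<infinity> \<and>
        (\<forall>q. sup_rho L (pstar L) \<le> sup_rho L q \<and> (sup_rho L q = sup_rho L (pstar L) \<longrightarrow> q = pstar L))"
      using robin_minimizer_sup_finite[OF opt] unfolding robin_minimizer_def pstar_def by blast
  qed
  have near: "eventually (\<lambda>L. near_optimal L (ps L)) (at_right 0)"
    using eventually_small_overlap by eventually_elim (use minimizer in \<open>simp add: robin_minimizer_def\<close>)
  have lim_aL: "((\<lambda>L. f (aL L)) \<longlongrightarrow> 1) (at_right 0)" if "(f \<longlongrightarrow> 1) (at_right 0)" for f
    using filterlim_compose[OF that aL_tendsto_0] .
  have "((\<lambda>L. ps L / p0 L) \<longlongrightarrow> 1) (at_right 0)"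
    by (rule tendsto_sandwich[OF _ _ lim_aL[OF bound_funs_tendsto_1(2)] lim_aL[OF bound_funs_tendsto_1(1)]])
       (use near in \<open>auto elim!: eventually_mono intro: near_optimal_ratio_ge near_optimal_ratio_le\<close>)
  then have "(\<lambda>L. complex_of_real (ps L)) \<sim>[at_right 0] (\<lambda>L. complex_of_real (p0 L))"
    by (rule asymp_equiv_complex_of_real)
  moreover have "pstar = (\<lambda>L. complex_of_real (ps L))" by (simp add: pstar_def fun_eq_iff)
  ultimately have ratio: "pstar \<sim>[at_right 0] (\<lambda>L. complex_of_real ((1/2) * root 3 (\<nu> * A0\<^sup>2 / L)))"
    by (simp add: p0_def)
  have "((\<lambda>L. 2 * ps L * (1 - sup_rho_real L (ps L)) / A0) \<longlongrightarrow> 1) (at_right 0)"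
    by (rule tendsto_sandwich[OF _ _ lim_aL[OF bound_funs_tendsto_1(3)] lim_aL[OF bound_funs_tendsto_1(4)]])
       (use near in \<open>auto elim!: eventually_mono intro: near_optimal_gain_bounds\<close>)
  then have "((\<lambda>L. (1 - sup_rho_real L (ps L)) / (A0 / (2 * ps L))) \<longlongrightarrow> 1) (at_right 0)"
    by (simp add: mult_ac)
  then have "(\<lambda>L. complex_of_real (1 - sup_rho_real L (ps L))) \<sim>[at_right 0] (\<lambda>L. complex_of_real (A0 / (2 * ps L)))"
    by (rule asymp_equiv_complex_of_real)
  then have gain: "(\<lambda>L. 1 - complex_of_real (real_of_ereal (sup_rho L (pstar L)))) \<sim>[at_right 0] (\<lambda>L. complex_of_real A0 / (2 * pstar L))"
    by (simp add: pstar_def sup_rho_real_def)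
  show ?thesis using L0(1) optimal ratio gain by blast
qed

end

theorem theorem2:
  fixes \<nu> b a c km \<omega>m :: real
  assumes "\<nu> > 0" and "b \<ge> 0" and "km \<ge> 0" and "\<omega>m > 0"
  defines "x0sq \<equiv> a\<^sup>2 + 4 * \<nu> * b"
  defines "A \<equiv> Aconst \<nu> c x0sq \<omega>m km"
  shows "\<exists>L0 > 0. \<exists>pstar :: real \<Rightarrow> complex.
           (\<forall>L \<in> {0<..<L0}.
              robin_sup \<nu> c x0sq \<omega>m km L (pstar L) < \<infinity> \<and>
              (\<forall>q. robin_sup \<nu> c x0sq \<omega>m km L (pstar L) \<le> robin_sup \<nu> c x0sq \<omega>m km L q \<and>
                   (robin_sup \<nu> c x0sq \<omega>m km L q = robin_sup \<nu> c x0sq \<omega>m km L (pstar L) \<longrightarrow> q = pstar L)))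
         \<and> (pstar \<sim>[at_right 0] (\<lambda>L. complex_of_real ((1/2) * root 3 (\<nu> * A\<^sup>2 / L))))
         \<and> ((\<lambda>L. 1 - complex_of_real (real_of_ereal (robin_sup \<nu> c x0sq \<omega>m km L (pstar L))))
              \<sim>[at_right 0] (\<lambda>L. complex_of_real A / (2 * pstar L)))"
proof -
  have x0: "x0sq \<ge> 0" using assms(1,2) by (simp add: x0sq_def)
  interpret robin_setting \<nu> c x0sq \<omega>m km by unfold_locales (use assms x0 in auto)
  have AA: "A = A0" by (simp add: A_def A0_def)
  show ?thesis unfolding AA by (rule robin_asymptotics)
qed

end
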